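(* Consider an instance of the Weight Constrained Shortest Path Problem (directed graph $G=(S,E)$, edge costs $\mathit{cost}_1,\mathit{cost}_2\ge 0$, states $\mathit{start},\mathit{goal}\in S$, weight limit $W$) that admits at least one $\mathit{start}$-$\mathit{goal}$ path $\pi$ with $\mathit{cost}_2(\pi)\le W$. Then the algorithm WC-A* (described in the context) terminates, and the node $\mathit{Sol}$ it returns corresponds to a cost-optimal solution path, i.e. the path obtained by following parent pointers from $\mathit{Sol}$ back to $\mathit{start}$, followed by the path from $s(\mathit{Sol})$ to $\mathit{goal}$ realising $(h_1(s(\mathit{Sol})),ub_2(s(\mathit{Sol})))$, is a cost-optimal solution path.
   Context: A path is a sequence of states $u_1,\dots,u_n$ with $(u_i,u_{i+1})\in E$; $\mathit{cost}_p(\pi)=\sum_i \mathit{cost}_p(u_i,u_{i+1})$ for $p\in\{1,2\}$. A cost-optimal solution path is a $\mathit{start}$-$\mathit{goal}$ path $\pi^*$ with $\mathit{cost}_2(\pi^* )\le W$ whose pair $(\mathit{cost}_1,\mathit{cost}_2)$ is lexicographically smallest among all $\mathit{start}$-$\mathit{goal}$ paths with $\mathit{cost}_2\le W$. WC-A*, initialisation: set $\overline{f_2}=W$, $\overline{f_1}=\infty$. (i) Run a bounded A* search backward from $\mathit{goal}$ (on the reversed graph) on $\mathit{cost}_2$ with an admissible heuristic, breaking ties on $\mathit{cost}_1$; for every state $u$ it expands it records $h_2(u)$ = minimum $\mathit{cost}_2$ of a $u$-$\mathit{goal}$ path and $ub_1(u)$ = the $\mathit{cost}_1$ of a $u$-$\mathit{goal}$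 path that is lexicographically minimal in $(\mathit{cost}_2,\mathit{cost}_1)$; when $\mathit{start}$ is about to be expanded it sets $\overline{f_1}\leftarrow ub_1(\mathit{start})$; it stops before expanding a state whose $f_2$-estimate exceeds $\overline{f_2}$. (ii) Then run a bounded backward A* from $\mathit{goal}$ on $\mathit{cost}_1$ with an admissible heuristic, breaking ties on $\mathit{cost}_2$, using only states expanded in (i); for each state $u$ it expands it records $h_1(u)$ = minimum $\mathit{cost}_1$ of a $u$-$\mathit{goal}$ path and $ub_2(u)$ = the $\mathit{cost}_2$ of such a path lexicographically minimal in $(\mathit{cost}_1,\mathit{cost}_2)$; it stops before expanding a state with $f_1$-estimate exceeding $\overline{f_1}$. States not explored in these searches are ignored in what follows. WC-A*, constrained search: a node $x$ stores a state $s(x)$, $\mathbf g(x)=(g_1(x),g_2(x))$ (costs of the path from $\mathit{start}$ to $s(x)$ given by its parent pointers), $\mathbf f(x)=\mathbf g(x)+\mathbf h(s(x))$, and a parent. Initialise $g_{min}(u)=\infty$ for all $u$, $f^{sol}_2=\infty$, $\mathit{Sol}$ empty, and a priority queue $\mathit{Open}$ containing the node for $\mathit{start}$ with $\mathbf g=(0,0)$. While $\mathit{Open}\ne\emptyset$: remove from $\mathit{Open}$ a node $x$ with lexicographically smallest $(f_1,f_2)$; if $f_1(x)>\overline{f_1}$ stop; if $g_2(x)\ge g_{min}(s(x))$ discard $x$ and continue; set $g_{min}(s(x))\leftarrow g_2(x)$. (Early solution update) Let $u=s(x)$, $f_1'=g_1(x)+ub_1(u)$, $f_2'=g_2(x)+ub_2(u)$.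 If $f_2'\le\overline{f_2}$: if $f_1(x)<\overline{f_1}$ or $f_2'<f^{sol}_2$, set $\overline{f_1}\leftarrow f_1(x)$, $f^{sol}_2\leftarrow f_2'$, $\mathit{Sol}\leftarrow x$. Otherwise, if $f_1'<\overline{f_1}$, set $\overline{f_1}\leftarrow f_1'$ and $f^{sol}_2\leftarrow\infty$. If $h_1(u)=ub_1(u)$, continue without expanding. Otherwise, for every edge $(u,v)\in E$ create node $y$ with $s(y)=v$, $\mathbf g(y)=\mathbf g(x)+\mathbf{cost}(u,v)$, $\mathbf f(y)=\mathbf g(y)+\mathbf h(v)$, parent $x$; discard $y$ if $g_2(y)\ge g_{min}(v)$, or $f_1(y)>\overline{f_1}$, or $f_2(y)>\overline{f_2}$; otherwise insert $y$ into $\mathit{Open}$. When the loop ends, return $\mathit{Sol}$. *)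

theory Defs
  imports Main "HOL-Library.Extended_Real" "HOL-Library.Multiset" "HOL-Library.Product_Lexorder"
begin

fun pcost :: "('a \<Rightarrow> 'a \<Rightarrow> real) \<Rightarrow> 'a list \<Rightarrow> real" where
  "pcost c (a # b # r) = c a b + pcost c (b # r)"
| "pcost c _ = 0"

definition is_path :: "('a \<times> 'a) set \<Rightarrow> 'a \<Rightarrow> 'a \<Rightarrow> 'a list \<Rightarrow> bool" where
  "is_path E u v p \<longleftrightarrow> p \<noteq> [] \<and> hd p = u \<and> last p = v \<and> successively (\<lambda>a b. (a, b) \<in> E) p"

text \<open>Cost-optimal solution path (lexicographic order on pairs via Product_Lexorder).\<close>
definition cost_optimal ::
  "('a \<times> 'a) set \<Rightarrow> ('a \<Rightarrow> 'a \<Rightarrow> real) \<Rightarrow> ('a \<Rightarrow> 'a \<Rightarrow> real) \<Rightarrow> real \<Rightarrow> 'a \<Rightarrow> 'a \<Rightarrow> 'a list \<Rightarrow> bool" where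
  "cost_optimal E c1 c2 W start goal \<pi> \<longleftrightarrow>
     is_path E start goal \<pi> \<and> pcost c2 \<pi> \<le> W \<and>
     (\<forall>\<pi>'. is_path E start goal \<pi>' \<and> pcost c2 \<pi>' \<le> W \<longrightarrow>
        (pcost c1 \<pi>, pcost c2 \<pi>) \<le> (pcost c1 \<pi>', pcost c2 \<pi>'))"

text \<open>Admissible heuristic for a backward search from goal (it estimates the cost of reaching
  u from start): it never overestimates the cost of a start-u path.\<close>
definition admissible :: "('a \<times> 'a) set \<Rightarrow> ('a \<Rightarrow> 'a \<Rightarrow> real) \<Rightarrow> 'a \<Rightarrow> ('a \<Rightarrow> real) \<Rightarrow> bool" where
  "admissible E c start h \<longleftrightarrow> (\<forall>u p. is_path E start u p \<longrightarrow> h u \<le> pcost c p)"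

definition h2v :: "('a \<times> 'a) set \<Rightarrow> ('a \<Rightarrow> 'a \<Rightarrow> real) \<Rightarrow> 'a \<Rightarrow> 'a \<Rightarrow> real" where
  "h2v E c2 goal u = Inf {pcost c2 p | p. is_path E u goal p}"

definition ub1v :: "('a \<times> 'a) set \<Rightarrow> ('a \<Rightarrow> 'a \<Rightarrow> real) \<Rightarrow> ('a \<Rightarrow> 'a \<Rightarrow> real) \<Rightarrow> 'a \<Rightarrow> 'a \<Rightarrow> real" where
  "ub1v E c1 c2 goal u = Inf {pcost c1 p | p. is_path E u goal p \<and> pcost c2 p = h2v E c2 goal u}"

text \<open>Phase (ii) only uses the states X expanded in phase (i).\<close>
definition h1v :: "('a \<times> 'a) set \<Rightarrow> ('a \<Rightarrow> 'a \<Rightarrow> real) \<Rightarrow> 'a \<Rightarrow> 'a set \<Rightarrow> 'a \<Rightarrow> real" where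
  "h1v E c1 goal X u = Inf {pcost c1 p | p. is_path E u goal p \<and> set p \<subseteq> X}"

definition ub2v :: "('a \<times> 'a) set \<Rightarrow> ('a \<Rightarrow> 'a \<Rightarrow> real) \<Rightarrow> ('a \<Rightarrow> 'a \<Rightarrow> real) \<Rightarrow> 'a \<Rightarrow> 'a set \<Rightarrow> 'a \<Rightarrow> real" where
  "ub2v E c1 c2 goal X u = Inf {pcost c2 p | p. is_path E u goal p \<and> set p \<subseteq> X \<and> pcost c1 p = h1v E c1 goal X u}"

definition run_terminates :: "('s \<Rightarrow> 's \<Rightarrow> bool) \<Rightarrow> ('s \<Rightarrow> bool) \<Rightarrow> 's \<Rightarrow> bool" where
  "run_terminates R H s0 \<longleftrightarrow>
     \<not> (\<exists>f. f 0 = s0 \<and> (\<forall>n. R (f n) (f (Suc n)))) \<and>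
     (\<forall>s. R\<^sup>*\<^sup>* s0 s \<and> \<not> H s \<longrightarrow> (\<exists>t. R s t))"

text \<open>Nodes are (state, g_p, g_q): p the primary cost, q the tie-breaking cost.
  bs_best records, for every expanded state, the best (g_p,g_q) with which it was expanded.\<close>
record 'a bs =
  bs_open :: "('a \<times> real \<times> real) multiset"
  bs_best :: "'a \<Rightarrow> (real \<times> real) option"
  bs_halted :: bool

definition bkey :: "('a \<Rightarrow> real) \<Rightarrow> ('a \<times> real \<times> real) \<Rightarrow> real \<times> real" where
  "bkey h x = (case x of (v, gp, gq) \<Rightarrow> (gp + h v, gq))"

inductive bs_step for E :: "('a \<times> 'a) set" and p q :: "'a \<Rightarrow> 'a \<Rightarrow> real"
  and h :: "'a \<Rightarrow> real" and A :: "'a set" and B :: ereal where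
  empty: "\<not> bs_halted \<sigma> \<Longrightarrow> bs_open \<sigma> = {#} \<Longrightarrow> bs_step E p q h A B \<sigma> (\<sigma>\<lparr>bs_halted := True\<rparr>)"
| stop: "\<not> bs_halted \<sigma> \<Longrightarrow> x \<in># bs_open \<sigma> \<Longrightarrow> (\<forall>y\<in>#bs_open \<sigma>. bkey h x \<le> bkey h y) \<Longrightarrow>
    ereal (fst (bkey h x)) > B \<Longrightarrow> bs_step E p q h A B \<sigma> (\<sigma>\<lparr>bs_halted := True\<rparr>)"
| discard: "\<not> bs_halted \<sigma> \<Longrightarrow> x \<in># bs_open \<sigma> \<Longrightarrow> (\<forall>y\<in>#bs_open \<sigma>. bkey h x \<le> bkey h y) \<Longrightarrow>
    x = (v, gp, gq) \<Longrightarrow> ereal (gp + h v) \<le> B \<Longrightarrow> bs_best \<sigma> v = Some b \<Longrightarrow> b \<le> (gp, gq) \<Longrightarrow>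
    bs_step E p q h A B \<sigma> (\<sigma>\<lparr>bs_open := bs_open \<sigma> - {#x#}\<rparr>)"
| expand: "\<not> bs_halted \<sigma> \<Longrightarrow> x \<in># bs_open \<sigma> \<Longrightarrow> (\<forall>y\<in>#bs_open \<sigma>. bkey h x \<le> bkey h y) \<Longrightarrow>
    x = (v, gp, gq) \<Longrightarrow> ereal (gp + h v) \<le> B \<Longrightarrow>
    bs_best \<sigma> v = None \<or> (\<exists>b. bs_best \<sigma> v = Some b \<and> (gp, gq) < b) \<Longrightarrow>
    bs_step E p q h A B \<sigma>
      (\<sigma>\<lparr>bs_open := bs_open \<sigma> - {#x#} +
            mset_set {(w, gp + p w v, gq + q w v) | w. (w, v) \<in> E \<and> w \<in> A},
         bs_best := (bs_best \<sigma>)(v := Some (gp, gq))\<rparr>)"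

definition bs_init :: "'a \<Rightarrow> 'a set \<Rightarrow> 'a bs" where
  "bs_init goal A = \<lparr>bs_open = (if goal \<in> A then {#(goal, 0, 0)#} else {#}),
                     bs_best = (\<lambda>_. None), bs_halted = False\<rparr>"

definition bs_expanded :: "'a bs \<Rightarrow> 'a set" where
  "bs_expanded \<sigma> = {v. bs_best \<sigma> v \<noteq> None}"

text \<open>A node is the list of states of its parent-pointer path, from start to s(x) = last x;
  its g-values are the path costs.\<close>
record 'a ms =
  ms_open :: "'a list multiset"
  ms_gmin :: "'a \<Rightarrow> ereal"
  ms_f1bar :: ereal
  ms_f2sol :: ereal
  ms_sol :: "'a list option"
  ms_halted :: bool

definition mkey :: "('a \<Rightarrow> 'a \<Rightarrow> real) \<Rightarrow> ('a \<Rightarrow> 'a \<Rightarrow> real) \<Rightarrow> ('a \<Rightarrow> real) \<Rightarrow> ('a \<Rightarrow> real)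
    \<Rightarrow> 'a list \<Rightarrow> real \<times> real" where
  "mkey c1 c2 h1 h2 x = (pcost c1 x + h1 (last x), pcost c2 x + h2 (last x))"

definition ms_process ::
  "('a \<times> 'a) set \<Rightarrow> ('a \<Rightarrow> 'a \<Rightarrow> real) \<Rightarrow> ('a \<Rightarrow> 'a \<Rightarrow> real) \<Rightarrow> real \<Rightarrow> 'a set
   \<Rightarrow> ('a \<Rightarrow> real) \<Rightarrow> ('a \<Rightarrow> real) \<Rightarrow> ('a \<Rightarrow> real) \<Rightarrow> ('a \<Rightarrow> real)
   \<Rightarrow> 'a list \<Rightarrow> 'a ms \<Rightarrow> 'a ms" where
  "ms_process E c1 c2 W X h1 h2 ub1 ub2 x \<sigma> =
    (let u = last x; ga = pcost c1 x; gb = pcost c2 x;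
         \<sigma>1 = \<sigma>\<lparr>ms_open := ms_open \<sigma> - {#x#}, ms_gmin := (ms_gmin \<sigma>)(u := ereal gb)\<rparr>;
         fa' = ga + ub1 u; fb' = gb + ub2 u; fx1 = ga + h1 u;
         \<sigma>2 = (if fb' \<le> W then
                 (if ereal fx1 < ms_f1bar \<sigma>1 \<or> ereal fb' < ms_f2sol \<sigma>1
                  then \<sigma>1\<lparr>ms_f1bar := ereal fx1, ms_f2sol := ereal fb', ms_sol := Some x\<rparr>
                  else \<sigma>1)
               else if ereal fa' < ms_f1bar \<sigma>1
                 then \<sigma>1\<lparr>ms_f1bar := ereal fa', ms_f2sol := \<infinity>\<rparr>
                 else \<sigma>1)
     in if h1 u = ub1 u then \<sigma>2
        else \<sigma>2\<lparr>ms_open := ms_open \<sigma>2 +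
               mset_set {x @ [v] | v. (u, v) \<in> E \<and> v \<in> X \<and>
                  \<not> (ereal (gb + c2 u v) \<ge> ms_gmin \<sigma>2 v) \<and>
                  \<not> (ereal (ga + c1 u v + h1 v) > ms_f1bar \<sigma>2) \<and>
                  \<not> (gb + c2 u v + h2 v > W)}\<rparr>)"

inductive ms_step for E :: "('a \<times> 'a) set" and c1 c2 :: "'a \<Rightarrow> 'a \<Rightarrow> real" and W :: real
  and X :: "'a set" and h1 h2 ub1 ub2 :: "'a \<Rightarrow> real" where
  empty: "\<not> ms_halted \<sigma> \<Longrightarrow> ms_open \<sigma> = {#} \<Longrightarrow>
    ms_step E c1 c2 W X h1 h2 ub1 ub2 \<sigma> (\<sigma>\<lparr>ms_halted := True\<rparr>)"
| stop: "\<not> ms_halted \<sigma> \<Longrightarrow> x \<in># ms_open \<sigma> \<Longrightarrow> (\<forall>y\<in>#ms_open \<sigma>. mkey c1 c2 h1 h2 x \<le> mkey c1 c2 h1 h2 y) \<Longrightarrow>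
    ereal (fst (mkey c1 c2 h1 h2 x)) > ms_f1bar \<sigma> \<Longrightarrow>
    ms_step E c1 c2 W X h1 h2 ub1 ub2 \<sigma> (\<sigma>\<lparr>ms_open := ms_open \<sigma> - {#x#}, ms_halted := True\<rparr>)"
| discard: "\<not> ms_halted \<sigma> \<Longrightarrow> x \<in># ms_open \<sigma> \<Longrightarrow> (\<forall>y\<in>#ms_open \<sigma>. mkey c1 c2 h1 h2 x \<le> mkey c1 c2 h1 h2 y) \<Longrightarrow>
    \<not> (ereal (fst (mkey c1 c2 h1 h2 x)) > ms_f1bar \<sigma>) \<Longrightarrow>
    ereal (pcost c2 x) \<ge> ms_gmin \<sigma> (last x) \<Longrightarrow>
    ms_step E c1 c2 W X h1 h2 ub1 ub2 \<sigma> (\<sigma>\<lparr>ms_open := ms_open \<sigma> - {#x#}\<rparr>)"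
| process: "\<not> ms_halted \<sigma> \<Longrightarrow> x \<in># ms_open \<sigma> \<Longrightarrow> (\<forall>y\<in>#ms_open \<sigma>. mkey c1 c2 h1 h2 x \<le> mkey c1 c2 h1 h2 y) \<Longrightarrow>
    \<not> (ereal (fst (mkey c1 c2 h1 h2 x)) > ms_f1bar \<sigma>) \<Longrightarrow>
    \<not> (ereal (pcost c2 x) \<ge> ms_gmin \<sigma> (last x)) \<Longrightarrow>
    ms_step E c1 c2 W X h1 h2 ub1 ub2 \<sigma> (ms_process E c1 c2 W X h1 h2 ub1 ub2 x \<sigma>)"

definition ms_init :: "'a \<Rightarrow> 'a set \<Rightarrow> ereal \<Rightarrow> 'a ms" where
  "ms_init start X F = \<lparr>ms_open = (if start \<in> X then {#[start]#} else {#}),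
     ms_gmin = (\<lambda>_. \<infinity>), ms_f1bar = F, ms_f2sol = \<infinity>, ms_sol = None, ms_halted = False\<rparr>"

end

(* Each of the three searches terminates because a node is expanded only when its label improves
   on what is recorded for its state, and every expanded label is the cost of a cycle-free path, of
   which there are finitely many.

   With admissible heuristics, phase (i) expands every state on a start-goal path within the weight
   limit and phase (ii) every state of an optimal path, so h1, h2, ub1, ub2 are costs of actual paths
   in the explored region, h1 and h2 are consistent, and ub1, ub2 are attained together with h2, h1.
   The constrained search keeps the invariant that, until the optimum (o1, o2) is recorded in
   (f1bar, f2sol), some node on an optimal path is open or dominated by a processed node. An open
   node on an optimal path has key at most o1 <= f1bar and so cannot remain when the search halts;
   hence at the end Sol is a node whose completion by its (h1, ub2)-path costs exactly (o1, o2). *)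

theory Submission
  imports Defs
begin

lemma lex_add_mono:
  fixes a c x :: "'a::ordered_ab_semigroup_add_imp_le" and b d y :: "'b::ordered_ab_semigroup_add_imp_le"
  shows "(a, b) \<le> (c, d) \<Longrightarrow> (a + x, b + y) \<le> (c + x, d + y)"
  by auto

lemma mset_arg_min_exists:
  fixes f :: "'b \<Rightarrow> 'c::linorder"
  assumes "M \<noteq> {#}"
  shows "\<exists>x. x \<in># M \<and> (\<forall>y\<in>#M. f x \<le> f y)"
proof -
  have "Min (f ` set_mset M) \<in> f ` set_mset M" using assms by (intro Min_in) auto
  then obtain x where "x \<in># M" "f x = Min (f ` set_mset M)" by (metis imageE)
  then show ?thesis by (metis Min_le finite_imageI finite_set_mset image_eqI)
qed

lemma run_terminatesI:
  assumes inv0: "I s0" and inv_step: "\<And>s t. I s \<Longrightarrow> R s t \<Longrightarrow> I t"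
    and decreasing: "\<And>s t. I s \<Longrightarrow> R s t \<Longrightarrow> (t, s) \<in> r" and "wf r"
    and progress: "\<And>s. I s \<Longrightarrow> \<not> H s \<Longrightarrow> \<exists>t. R s t"
  shows "run_terminates R H s0"
proof -
  have reachable: "I s" if "R\<^sup>*\<^sup>* s0 s" for s
    using that by (induction rule: rtranclp_induct) (auto intro: inv0 inv_step)
  have "\<nexists>f. f 0 = s0 \<and> (\<forall>n. R (f n) (f (Suc n)))"
  proof
    assume "\<exists>f. f 0 = s0 \<and> (\<forall>n. R (f n) (f (Suc n)))"
    then obtain f where f: "f 0 = s0" "\<And>n. R (f n) (f (Suc n))" by blast
    have "I (f n)" for n by (induction n) (auto simp: f(1) inv0 intro: inv_step f(2))
    then have "\<forall>i. (f (Suc i), f i) \<in> r" using decreasing f(2) by blast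
    then show False using \<open>wf r\<close> unfolding wf_iff_no_infinite_down_chain by blast
  qed
  then show ?thesis unfolding run_terminates_def using reachable progress by blast
qed

section \<open>Paths and their costs\<close>

definition nonneg :: "('a \<times> 'a) set \<Rightarrow> ('a \<Rightarrow> 'a \<Rightarrow> real) \<Rightarrow> bool" where
  "nonneg E c \<longleftrightarrow> (\<forall>(a, b)\<in>E. c a b \<ge> 0)"

lemma successively_take: "successively P xs \<Longrightarrow> successively P (take k xs)"
  by (metis append_take_drop_id successively_append_iff)

lemma successively_drop: "successively P xs \<Longrightarrow> successively P (drop k xs)"
  by (metis append_take_drop_id successively_append_iff)

lemma pcost_append_Cons: "pcost c (xs @ y # ys) = pcost c (xs @ [y]) + pcost c (y # ys)"
  by (induction xs rule: induct_list012) auto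

lemma pcost_append_tl:
  assumes "y \<noteq> []" "r \<noteq> []" "hd r = last y"
  shows "pcost c (y @ tl r) = pcost c y + pcost c r"
proof -
  obtain ys where "y = ys @ [last y]" using assms(1) by (metis append_butlast_last_id)
  moreover have "r = last y # tl r" using assms(2,3) by (metis list.collapse)
  ultimately show ?thesis by (metis pcost_append_Cons append.assoc append_Cons append_Nil)
qed

lemma pcost_snoc: "xs \<noteq> [] \<Longrightarrow> pcost c (xs @ [w]) = pcost c xs + c (last xs) w"
  using pcost_append_tl[of xs "[last xs, w]" c] by simp

lemma pcost_nonneg:
  assumes "nonneg E c" "successively (\<lambda>a b. (a, b) \<in> E) p"
  shows "pcost c p \<ge> 0"
  using assms(2) by (induction p rule: induct_list012) (use assms(1) in \<open>auto simp: nonneg_def\<close>)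

lemma pcost_take_drop:
  assumes "k < length p"
  shows "pcost c p = pcost c (take (Suc k) p) + pcost c (drop k p)"
proof -
  have "p = take k p @ p ! k # drop (Suc k) p" using assms by (simp add: id_take_nth_drop)
  then show ?thesis
    using assms pcost_append_Cons
    by (metis Cons_nth_drop_Suc take_Suc_conv_app_nth)
qed

lemma pcost_drop_le:
  assumes "nonneg E c" "successively (\<lambda>a b. (a, b) \<in> E) p"
  shows "pcost c (drop k p) \<le> pcost c p"
proof (cases "k < length p")
  case True
  have "pcost c (take (Suc k) p) \<ge> 0" using pcost_nonneg[OF assms(1) successively_take[OF assms(2)]] .
  then show ?thesis using pcost_take_drop[OF True, of c] by linarith
qed (use pcost_nonneg[OF assms] in simp)

lemma pcost_take_le:
  assumes "nonneg E c" "successively (\<lambda>a b. (a, b) \<in> E) p"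
  shows "pcost c (take k p) \<le> pcost c p"
proof (cases "0 < k \<and> k < length p")
  case True
  then obtain j where j: "k = Suc j" "j < length p" by (metis Suc_pred less_imp_diff_less)
  have "pcost c (drop j p) \<ge> 0" using pcost_nonneg[OF assms(1) successively_drop[OF assms(2)]] .
  then show ?thesis using pcost_take_drop[OF j(2), of c] unfolding j(1) by linarith
qed (use pcost_nonneg[OF assms] in auto)

lemma is_path_Cons: "is_path E u v (u # w # r) \<longleftrightarrow> (u, w) \<in> E \<and> is_path E w v (w # r)"
  unfolding is_path_def by auto

lemma is_path_single [simp]: "is_path E u v [x] \<longleftrightarrow> u = x \<and> v = x"
  unfolding is_path_def by auto

lemma is_path_append_tl:
  assumes "is_path E u v y" "is_path E v w r"
  shows "is_path E u w (y @ tl r)"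
proof -
  obtain ys where y: "y = ys @ [v]" using assms(1) unfolding is_path_def by (metis append_butlast_last_id)
  obtain rs where r: "r = v # rs" using assms(2) unfolding is_path_def by (metis list.collapse)
  have "successively (\<lambda>a b. (a, b) \<in> E) (ys @ v # rs)"
    using assms y r unfolding is_path_def by (auto simp: successively_append_iff)
  then show ?thesis using assms y r unfolding is_path_def by (cases ys) auto
qed

lemma is_path_snoc: "is_path E u v y \<Longrightarrow> (v, w) \<in> E \<Longrightarrow> is_path E u w (y @ [w])"
  using is_path_append_tl[of E u v y w "[v, w]"] by (simp add: is_path_def)

lemma is_path_take:
  assumes "is_path E u v \<rho>" "k < length \<rho>"
  shows "is_path E u (\<rho> ! k) (take (Suc k) \<rho>)"
proof -
  have "take (Suc k) \<rho> \<noteq> []" "last (take (Suc k) \<rho>) = \<rho> ! k"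
    using assms(2) by (auto simp: take_Suc_conv_app_nth)
  then show ?thesis using assms(1) unfolding is_path_def by (simp add: successively_take)
qed

lemma is_path_drop:
  assumes "is_path E u v \<rho>" "k < length \<rho>"
  shows "is_path E (\<rho> ! k) v (drop k \<rho>)"
  using assms unfolding is_path_def
  by (auto simp: hd_drop_conv_nth intro: successively_drop)

lemma successively_edges_tl_subset: "successively (\<lambda>a b. (a, b) \<in> E) (x # p) \<Longrightarrow> set p \<subseteq> snd ` E"
proof (induction p arbitrary: x)
  case (Cons a p)
  then have "(x, a) \<in> E" "set p \<subseteq> snd ` E" by auto
  then show ?case by (auto intro: rev_image_eqI)
qed simp

lemma successively_edges_butlast_subset: "successively (\<lambda>a b. (a, b) \<in> E) (p @ [x]) \<Longrightarrow> set p \<subseteq> fst ` E"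
proof (induction p)
  case (Cons a p)
  then have "(a, hd (p @ [x])) \<in> E" "set p \<subseteq> fst ` E" by (auto simp: successively_Cons)
  then show ?case by (auto intro: rev_image_eqI)
qed simp

lemma is_path_set_from: "is_path E u v p \<Longrightarrow> set p \<subseteq> insert u (snd ` E)"
  unfolding is_path_def by (cases p) (auto dest: successively_edges_tl_subset)

lemma is_path_set_to:
  assumes "is_path E u v p"
  shows "set p \<subseteq> insert v (fst ` E)"
proof -
  have p: "p = butlast p @ [v]" using assms unfolding is_path_def by (metis append_butlast_last_id)
  have "set (butlast p) \<subseteq> fst ` E"
    using assms p unfolding is_path_def by (metis successively_edges_butlast_subset)
  then show ?thesis by (subst p) auto
qed

lemma finite_distinct_paths_from:
  "finite E \<Longrightarrow> finite {p. (\<exists>v. is_path E u v p) \<and> distinct p}"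
  by (rule finite_subset[OF _ finite_subset_distinct[of "insert u (snd ` E)"]])
    (auto dest: is_path_set_from)

lemma finite_distinct_paths_to:
  "finite E \<Longrightarrow> finite {p. (\<exists>u. is_path E u v p) \<and> distinct p}"
  by (rule finite_subset[OF _ finite_subset_distinct[of "insert v (fst ` E)"]])
    (auto dest: is_path_set_to)

lemma successively_cut_cycle:
  assumes "successively P (xs @ y # ys @ y # zs)"
  shows "successively P (xs @ y # zs)" "successively P (y # ys @ [y])"
proof -
  have xs: "successively P xs" "xs = [] \<or> P (last xs) y"
    and cycle: "successively P (y # ys @ y # zs)"
    using assms by (simp_all add: successively_append_iff)
  have "successively P (y # ys)" "P (last (y # ys)) y" "successively P (y # zs)"
    using cycle by (metis append_Cons successively_append_iff list.distinct(1) list.sel(1))+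
  then show "successively P (xs @ y # zs)" "successively P (y # ys @ [y])"
    using xs by (metis append_Cons successively_append_iff list.distinct(1) list.sel(1)
        successively.simps(2))+
qed

lemma is_path_cut_cycle:
  assumes "is_path E u v (xs @ y # ys @ y # zs)"
  shows "is_path E u v (xs @ y # zs)"
proof -
  have "successively (\<lambda>a b. (a, b) \<in> E) (xs @ y # zs)"
    by (rule successively_cut_cycle(1)[of _ xs y ys zs]) (use assms in \<open>simp add: is_path_def\<close>)
  then show ?thesis using assms unfolding is_path_def by (cases xs) auto
qed

lemma pcost_cut_cycle_le:
  assumes "nonneg E c" "successively (\<lambda>a b. (a, b) \<in> E) (xs @ y # ys @ y # zs)"
  shows "pcost c (xs @ y # zs) \<le> pcost c (xs @ y # ys @ y # zs)"
proof -
  have "pcost c (y # ys @ [y]) \<ge> 0" by (rule pcost_nonneg[OF assms(1) successively_cut_cycle(2)[OF assms(2)]])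
  moreover have "pcost c (xs @ y # ys @ y # zs) = pcost c (xs @ [y]) + pcost c (y # ys @ [y]) + pcost c (y # zs)"
    using pcost_append_Cons[of c xs y "ys @ y # zs"] pcost_append_Cons[of c "y # ys" y zs] by simp
  ultimately show ?thesis using pcost_append_Cons[of c xs y zs] by linarith
qed

lemma path_shorten_distinct:
  assumes "is_path E u v p"
  shows "\<exists>p'. is_path E u v p' \<and> distinct p' \<and> set p' \<subseteq> set p \<and>
     (\<forall>c. nonneg E c \<longrightarrow> pcost c p' \<le> pcost c p)"
  using assms
proof (induction "length p" arbitrary: p rule: less_induct)
  case less
  show ?case
  proof (cases "distinct p")
    case False
    then obtain xs y ys zs where p: "p = xs @ y # ys @ y # zs"
      using not_distinct_decomp[of p] by auto
    have "length (xs @ y # zs) < length p" unfolding p by simp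
    moreover have "is_path E u v (xs @ y # zs)" using is_path_cut_cycle less.prems unfolding p .
    ultimately obtain p' where p': "is_path E u v p'" "distinct p'" "set p' \<subseteq> set (xs @ y # zs)"
      "\<forall>c. nonneg E c \<longrightarrow> pcost c p' \<le> pcost c (xs @ y # zs)"
      using less.hyps by blast
    moreover have "\<forall>c. nonneg E c \<longrightarrow> pcost c (xs @ y # zs) \<le> pcost c p"
      using pcost_cut_cycle_le[of E] less.prems unfolding p is_path_def by blast
    moreover have "set (xs @ y # zs) \<subseteq> set p" unfolding p by auto
    ultimately show ?thesis by (meson order_trans)
  qed (use less.prems in blast)
qed

lemma lexmin_path_exists:
  assumes "finite E" "nonneg E c" "nonneg E d"
    and path: "\<And>p. Q p \<Longrightarrow> is_path E u v p"
    and shorten: "\<And>p p'. Q p \<Longrightarrow> is_path E u v p' \<Longrightarrow> set p' \<subseteq> set p \<Longrightarrow>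
               pcost c p' \<le> pcost c p \<Longrightarrow> pcost d p' \<le> pcost d p \<Longrightarrow> Q p'"
    and "Q p1"
  shows "\<exists>p0. Q p0 \<and> (\<forall>p. Q p \<longrightarrow> (pcost c p0, pcost d p0) \<le> (pcost c p, pcost d p))"
proof -
  let ?F = "{p. Q p \<and> distinct p}"
  let ?f = "\<lambda>p. (pcost c p, pcost d p)"
  have fin: "finite ?F"
    by (rule finite_subset[OF _ finite_distinct_paths_from[OF assms(1), of u]]) (auto dest: path)
  have distinct_below: "\<exists>p'\<in>?F. ?f p' \<le> ?f p" if Qp: "Q p" for p
  proof -
    obtain p' where p': "is_path E u v p'" "distinct p'" "set p' \<subseteq> set p"
      "\<forall>c. nonneg E c \<longrightarrow> pcost c p' \<le> pcost c p"
      using path_shorten_distinct[OF path[OF Qp]] by blast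
    then have "Q p'" using shorten[OF Qp] assms(2,3) by blast
    then show ?thesis using p' assms(2,3) by (auto simp: less_eq_prod_def)
  qed
  define m where "m = Min (?f ` ?F)"
  have "?F \<noteq> {}" using distinct_below[OF assms(6)] by blast
  then have "m \<in> ?f ` ?F" unfolding m_def using fin by (intro Min_in) auto
  then obtain p0 where p0: "p0 \<in> ?F" "?f p0 = m" by blast
  have "?f p0 \<le> ?f p" if Qp: "Q p" for p
  proof -
    obtain p' where p': "p' \<in> ?F" "?f p' \<le> ?f p" using distinct_below[OF Qp] by blast
    have "m \<le> ?f p'" unfolding m_def using fin p'(1) by (intro Min_le) auto
    then show ?thesis using p0(2) p'(2) by (metis order_trans)
  qed
  then show ?thesis using p0(1) by blast
qed

lemma optimal_path_exists:
  assumes "finite E" "nonneg E c1" "nonneg E c2"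
    and "\<exists>\<pi>. is_path E start goal \<pi> \<and> pcost c2 \<pi> \<le> W"
  shows "\<exists>\<pi>. cost_optimal E c1 c2 W start goal \<pi>"
proof -
  let ?Q = "\<lambda>p. is_path E start goal p \<and> pcost c2 p \<le> W"
  obtain \<pi>1 where "?Q \<pi>1" using assms(4) by blast
  then have "\<exists>p0. ?Q p0 \<and> (\<forall>p. ?Q p \<longrightarrow> (pcost c1 p0, pcost c2 p0) \<le> (pcost c1 p, pcost c2 p))"
    by (intro lexmin_path_exists[OF assms(1-3), of ?Q start goal \<pi>1]) auto
  then show ?thesis unfolding cost_optimal_def by blast
qed

section \<open>Bounded backward A*\<close>

definition improves :: "'a bs \<Rightarrow> 'a \<Rightarrow> real \<times> real \<Rightarrow> bool" where
  "improves \<sigma> v val \<longleftrightarrow> bs_best \<sigma> v = None \<or> (\<exists>b. bs_best \<sigma> v = Some b \<and> val < b)"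

locale backward_search =
  fixes E :: "('a \<times> 'a) set" and p q :: "'a \<Rightarrow> 'a \<Rightarrow> real"
    and h :: "'a \<Rightarrow> real" and A :: "'a set" and B :: ereal and goal :: 'a
  assumes finite_E: "finite E" and nonneg_p: "nonneg E p" and nonneg_q: "nonneg E q"
begin

abbreviation "step \<equiv> bs_step E p q h A B"

abbreviation "reachable \<sigma> \<equiv> step\<^sup>*\<^sup>* (bs_init goal A) \<sigma>"

lemma finite_children: "finite {(w, gp + p w v, gq + q w v) | w. (w, v) \<in> E \<and> w \<in> A}"
proof -
  have "{(w, gp + p w v, gq + q w v) | w. (w, v) \<in> E \<and> w \<in> A} \<subseteq> (\<lambda>w. (w, gp + p w v, gq + q w v)) ` fst ` E"
    by force
  then show ?thesis using finite_E by (meson finite_imageI finite_subset)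
qed

lemma suffix_cost_le:
  assumes "is_path E u v \<rho>"
  shows "(pcost p (drop k \<rho>), pcost q (drop k \<rho>)) \<le> (pcost p \<rho>, pcost q \<rho>)"
  using pcost_drop_le[OF nonneg_p] pcost_drop_le[OF nonneg_q] assms unfolding is_path_def
  by simp

text \<open>All later states of a witness have already been expanded with a label no worse than their
  remaining cost. So the witness of a node that improves the label of its state repeats no state, and
  expanded labels range over the finitely many cycle-free paths.\<close>

definition witness :: "'a bs \<Rightarrow> 'a \<Rightarrow> real \<Rightarrow> real \<Rightarrow> 'a list \<Rightarrow> bool" where
  "witness \<sigma> v a b \<rho> \<longleftrightarrow> is_path E v goal \<rho> \<and> set \<rho> \<subseteq> A \<and> pcost p \<rho> = a \<and> pcost q \<rho> = b \<and>
     distinct (tl \<rho>) \<and> (\<forall>k. 0 < k \<and> k < length \<rho> \<longrightarrow>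
        (\<exists>bb. bs_best \<sigma> (\<rho> ! k) = Some bb \<and> bb \<le> (pcost p (drop k \<rho>), pcost q (drop k \<rho>))))"

definition sound :: "'a bs \<Rightarrow> bool" where
  "sound \<sigma> \<longleftrightarrow> (\<forall>x\<in>#bs_open \<sigma>. \<exists>\<rho>. witness \<sigma> (fst x) (fst (snd x)) (snd (snd x)) \<rho>) \<and>
     (\<forall>v\<in>bs_expanded \<sigma>. \<exists>\<rho>. is_path E v goal \<rho> \<and> set \<rho> \<subseteq> A)"

lemma witness_mono:
  assumes "witness \<sigma> u a b \<rho>"
    and "\<And>w bb. bs_best \<sigma> w = Some bb \<Longrightarrow> \<exists>bb'. bs_best \<sigma>' w = Some bb' \<and> bb' \<le> bb"
  shows "witness \<sigma>' u a b \<rho>"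
  using assms unfolding witness_def by (meson order_trans)

lemma witness_best:
  assumes "witness \<sigma> v a b \<rho>" "0 < k" "k < length \<rho>"
  shows "\<exists>bb. bs_best \<sigma> (\<rho> ! k) = Some bb \<and> bb \<le> (pcost p (drop k \<rho>), pcost q (drop k \<rho>))"
  using assms unfolding witness_def by simp

lemma witness_distinct:
  assumes "witness \<sigma> v gp gq \<rho>" "improves \<sigma> v (gp, gq)"
  shows "distinct \<rho>"
proof -
  have path: "is_path E v goal \<rho>" and "distinct (tl \<rho>)"
    and cost: "pcost p \<rho> = gp" "pcost q \<rho> = gq" using assms(1) unfolding witness_def by auto
  obtain t where \<rho>: "\<rho> = v # t" using path unfolding is_path_def by (cases \<rho>) auto
  have "v \<notin> set t"
  proof
    assume "v \<in> set t"
    then obtain j where j: "j < length t" "t ! j = v" by (meson in_set_conv_nth)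
    then have "0 < Suc j" "Suc j < length \<rho>" using \<rho> by auto
    then obtain bb where bb: "bs_best \<sigma> (\<rho> ! Suc j) = Some bb"
      "bb \<le> (pcost p (drop (Suc j) \<rho>), pcost q (drop (Suc j) \<rho>))"
      using witness_best[OF assms(1)] by blast
    have "bb \<le> (gp, gq)" using order_trans[OF bb(2) suffix_cost_le[OF path]] cost by simp
    moreover have "\<rho> ! Suc j = v" using j \<rho> by simp
    ultimately show False using assms(2) bb(1) unfolding improves_def by auto
  qed
  then show ?thesis using \<open>distinct (tl \<rho>)\<close> \<rho> by simp
qed

lemma witness_Cons:
  assumes "witness \<sigma> v gp gq \<rho>" "distinct \<rho>" "(w, v) \<in> E" "w \<in> A"
    and best_v: "bs_best \<sigma>' v = Some (gp, gq)"
    and best_other: "\<And>u. u \<noteq> v \<Longrightarrow> bs_best \<sigma>' u = bs_best \<sigma> u"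
  shows "witness \<sigma>' w (gp + p w v) (gq + q w v) (w # \<rho>)"
proof -
  have path: "is_path E v goal \<rho>" and cost: "pcost p \<rho> = gp" "pcost q \<rho> = gq"
    using assms(1) unfolding witness_def by auto
  obtain t where \<rho>: "\<rho> = v # t" using path unfolding is_path_def by (cases \<rho>) auto
  have later: "\<exists>bb. bs_best \<sigma>' (\<rho> ! j) = Some bb \<and> bb \<le> (pcost p (drop j \<rho>), pcost q (drop j \<rho>))"
    if j: "j < length \<rho>" for j
  proof (cases j)
    case (Suc i)
    then have "\<rho> ! j \<noteq> v" using nth_eq_iff_index_eq[OF assms(2) j, of 0] \<rho> by auto
    moreover obtain bb where "bs_best \<sigma> (\<rho> ! j) = Some bb"
      "bb \<le> (pcost p (drop j \<rho>), pcost q (drop j \<rho>))"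
      using witness_best[OF assms(1) _ j] Suc by blast
    ultimately show ?thesis using best_other by auto
  qed (simp add: \<rho> best_v cost[unfolded \<rho>])
  have "\<exists>bb. bs_best \<sigma>' ((w # \<rho>) ! k) = Some bb \<and>
            bb \<le> (pcost p (drop k (w # \<rho>)), pcost q (drop k (w # \<rho>)))"
    if "0 < k" "k < length (w # \<rho>)" for k
    using later[of "k - 1"] that by (cases k) auto
  moreover have "is_path E w goal (w # \<rho>)" using path assms(3) unfolding \<rho> by (simp add: is_path_Cons)
  moreover have "pcost p (w # \<rho>) = gp + p w v" "pcost q (w # \<rho>) = gq + q w v"
    unfolding \<rho> by (simp_all add: cost[unfolded \<rho>])
  ultimately show ?thesis using assms(1,2,4) unfolding witness_def by auto
qed

lemma sound_init: "sound (bs_init goal A)"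
  unfolding sound_def bs_init_def witness_def bs_expanded_def by (auto simp: is_path_def)

lemma sound_step:
  assumes "sound \<sigma>" "step \<sigma> \<sigma>'"
  shows "sound \<sigma>'"
  using assms(2)
proof cases
  case (discard x v gp gq b)
  then show ?thesis using assms(1) unfolding sound_def witness_def bs_expanded_def by (auto dest: in_diffD)
next
  case (expand x v gp gq)
  obtain \<rho> where \<rho>: "witness \<sigma> v gp gq \<rho>" using assms(1) expand unfolding sound_def by fastforce
  have improves: "improves \<sigma> v (gp, gq)" using expand unfolding improves_def by simp
  have distinct: "distinct \<rho>" using witness_distinct[OF \<rho> improves] .
  have best_v: "bs_best \<sigma>' v = Some (gp, gq)" and best_other: "\<And>u. u \<noteq> v \<Longrightarrow> bs_best \<sigma>' u = bs_best \<sigma> u"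
    using expand by simp_all
  have better: "\<exists>bb'. bs_best \<sigma>' w = Some bb' \<and> bb' \<le> bb" if "bs_best \<sigma> w = Some bb" for w bb
    using that improves best_v best_other unfolding improves_def by (cases "w = v") auto
  have "\<exists>\<rho>. witness \<sigma>' (fst y) (fst (snd y)) (snd (snd y)) \<rho>" if "y \<in># bs_open \<sigma>'" for y
  proof -
    have "y \<in># bs_open \<sigma> \<or> (\<exists>w. y = (w, gp + p w v, gq + q w v) \<and> (w, v) \<in> E \<and> w \<in> A)"
      using that expand finite_children by (auto dest: in_diffD)
    then show ?thesis
      using assms(1) witness_mono[OF _ better] witness_Cons[OF \<rho> distinct _ _ best_v best_other]
      unfolding sound_def by fastforce
  qed
  moreover have "\<exists>\<rho>. is_path E u goal \<rho> \<and> set \<rho> \<subseteq> A" if "u \<in> bs_expanded \<sigma>'" for u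
    using that \<rho> assms(1) best_other unfolding sound_def witness_def bs_expanded_def
    by (cases "u = v") auto
  ultimately show ?thesis unfolding sound_def by blast
qed (use assms(1) in \<open>auto simp: sound_def witness_def bs_expanded_def\<close>)

definition labels :: "('a \<times> real \<times> real) set" where
  "labels = (\<lambda>\<rho>. (hd \<rho>, (pcost p \<rho>, pcost q \<rho>))) ` {\<rho>. (\<exists>u. is_path E u goal \<rho>) \<and> distinct \<rho>}"

definition improvable :: "'a bs \<Rightarrow> ('a \<times> real \<times> real) set" where
  "improvable \<sigma> = {(v, val) \<in> labels. improves \<sigma> v val}"

lemma finite_labels: "finite labels"
  unfolding labels_def using finite_distinct_paths_to[OF finite_E] by blast

definition step_measure :: "('a bs \<times> 'a bs) set" where
  "step_measure = measures [\<lambda>\<sigma>. if bs_halted \<sigma> then 0 else 1, \<lambda>\<sigma>. card (improvable \<sigma>),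
     \<lambda>\<sigma>. size (bs_open \<sigma>)]"

lemma improvable_expand:
  assumes "witness \<sigma> v gp gq \<rho>" "improves \<sigma> v (gp, gq)"
    and "bs_best \<sigma>' = (bs_best \<sigma>)(v := Some (gp, gq))"
  shows "improvable \<sigma>' \<subset> improvable \<sigma>"
proof
  have "improves \<sigma> u val" if "improves \<sigma>' u val" for u val
  proof (cases "u = v")
    case True
    then have "val < (gp, gq)" using that assms(3) unfolding improves_def by simp
    then show ?thesis using assms(2) True unfolding improves_def by (metis less_trans)
  qed (use that assms(3) in \<open>simp add: improves_def\<close>)
  then show "improvable \<sigma>' \<subseteq> improvable \<sigma>" unfolding improvable_def by blast
  have "is_path E v goal \<rho>" "distinct \<rho>" "pcost p \<rho> = gp" "pcost q \<rho> = gq"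
    using assms(1) witness_distinct[OF assms(1,2)] unfolding witness_def by auto
  then have "(v, gp, gq) \<in> labels" unfolding labels_def is_path_def by force
  moreover have "\<not> improves \<sigma>' v (gp, gq)" using assms(3) unfolding improves_def by simp
  ultimately show "improvable \<sigma>' \<noteq> improvable \<sigma>" using assms(2) unfolding improvable_def by blast
qed

lemma step_decreases:
  assumes "sound \<sigma>" "step \<sigma> \<sigma>'"
  shows "(\<sigma>', \<sigma>) \<in> step_measure"
  using assms(2)
proof cases
  case (discard x v gp gq b)
  then show ?thesis unfolding step_measure_def improvable_def improves_def
    by (intro measures_lesseq measures_less) (auto simp: size_Diff1_less)
next
  case (expand x v gp gq)
  obtain \<rho> where "witness \<sigma> v gp gq \<rho>" using assms(1) expand unfolding sound_def by fastforce
  moreover have "improves \<sigma> v (gp, gq)" using expand unfolding improves_def by simp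
  ultimately have "improvable \<sigma>' \<subset> improvable \<sigma>" by (rule improvable_expand) (use expand in simp)
  moreover have "finite (improvable \<sigma>)"
    using finite_labels unfolding improvable_def by (rule finite_subset[rotated]) auto
  ultimately have "card (improvable \<sigma>') < card (improvable \<sigma>)" by (rule psubset_card_mono[rotated])
  then show ?thesis unfolding step_measure_def using expand by (intro measures_lesseq measures_less) auto
qed (auto simp: step_measure_def)

lemma step_exists:
  fixes \<sigma> :: "'a bs"
  assumes "\<not> bs_halted \<sigma>"
  shows "\<exists>\<sigma>'. step \<sigma> \<sigma>'"
proof (cases "bs_open \<sigma> = {#}")
  case False
  then obtain x where x: "x \<in># bs_open \<sigma>" "\<forall>y\<in>#bs_open \<sigma>. bkey h x \<le> bkey h y"
    using mset_arg_min_exists by blast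
  obtain v gp gq where xv: "x = (v, gp, gq)" by (cases x) auto
  show ?thesis
  proof (cases "ereal (gp + h v) \<le> B")
    case False
    then have "ereal (fst (bkey h x)) > B" using xv by (simp add: bkey_def not_le)
    then show ?thesis using bs_step.stop[OF assms x] by blast
  next
    case within_bound: True
    show ?thesis
    proof (cases "improves \<sigma> v (gp, gq)")
      case True
      then show ?thesis using bs_step.expand[OF assms x xv within_bound] unfolding improves_def by blast
    next
      case False
      then obtain b where "bs_best \<sigma> v = Some b" "b \<le> (gp, gq)"
        by (cases "bs_best \<sigma> v") (auto simp: improves_def not_less)
      then show ?thesis using bs_step.discard[OF assms x xv within_bound] by blast
    qed
  qed
qed (use bs_step.empty[OF assms] in blast)

lemma bs_terminates: "run_terminates step bs_halted (bs_init goal A)"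
  by (rule run_terminatesI[of sound _ _ step_measure])
    (use sound_init sound_step step_decreases step_exists in \<open>auto simp: step_measure_def\<close>)

lemma expanded_has_path:
  assumes "reachable \<sigma>" "v \<in> bs_expanded \<sigma>"
  shows "\<exists>\<rho>. is_path E v goal \<rho> \<and> set \<rho> \<subseteq> A"
proof -
  have "sound \<sigma>" using assms(1) by (induction rule: rtranclp_induct) (auto intro: sound_init sound_step)
  then show ?thesis using assms(2) unfolding sound_def by blast
qed

text \<open>Since every expanded label is propagated along each incoming edge, after halting a path whose
  f-values all stay within the bound is traced back from goal through expanded states.\<close>

definition covered :: "'a bs \<Rightarrow> 'a \<Rightarrow> real \<times> real \<Rightarrow> bool" where
  "covered \<sigma> w val \<longleftrightarrow> (\<exists>a b. (w, a, b) \<in># bs_open \<sigma> \<and> (a, b) \<le> val) \<or>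
                    (\<exists>bb. bs_best \<sigma> w = Some bb \<and> bb \<le> val)"

definition complete :: "'a bs \<Rightarrow> bool" where
  "complete \<sigma> \<longleftrightarrow> (goal \<in> A \<longrightarrow> covered \<sigma> goal (0, 0)) \<and>
     (\<forall>w w' bb. (w, w') \<in> E \<and> w \<in> A \<and> bs_best \<sigma> w' = Some bb \<longrightarrow>
         covered \<sigma> w (fst bb + p w w', snd bb + q w w')) \<and>
     (bs_halted \<sigma> \<longrightarrow> (\<forall>y\<in>#bs_open \<sigma>. ereal (fst (bkey h y)) > B))"

lemma coveredE:
  assumes "covered \<sigma> w val"
  obtains (queued) a b where "(w, a, b) \<in># bs_open \<sigma>" "(a, b) \<le> val"
    | (expanded) bb where "bs_best \<sigma> w = Some bb" "bb \<le> val"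
  using assms unfolding covered_def by blast

lemma covered_mono: "covered \<sigma> w val \<Longrightarrow> val \<le> val' \<Longrightarrow> covered \<sigma> w val'"
  unfolding covered_def by (meson order_trans)

lemma covered_step:
  assumes "step \<sigma> \<sigma>'" "covered \<sigma> w val"
  shows "covered \<sigma>' w val"
  using assms(1)
proof cases
  case (discard x v gp gq b)
  from assms(2) show ?thesis
  proof (cases rule: coveredE)
    case (queued a b')
    then show ?thesis
      using discard by (cases "(w, a, b') = x") (auto simp: covered_def in_diff_count intro: order_trans)
  qed (use discard in \<open>auto simp: covered_def\<close>)
next
  case (expand x v gp gq)
  have best_v: "bs_best \<sigma>' v = Some (gp, gq)" and best_other: "\<And>u. u \<noteq> v \<Longrightarrow> bs_best \<sigma>' u = bs_best \<sigma> u"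
    using expand by simp_all
  from assms(2) show ?thesis
  proof (cases rule: coveredE)
    case (queued a b')
    then show ?thesis
      using expand best_v by (cases "(w, a, b') = x") (auto simp: covered_def in_diff_count)
  next
    case (expanded bb)
    show ?thesis
    proof (cases "w = v")
      case True
      have "improves \<sigma> v (gp, gq)" using expand unfolding improves_def by simp
      then have "(gp, gq) < bb" using expanded True unfolding improves_def by auto
      then have "(gp, gq) \<le> val" using expanded(2) by (meson less_imp_le order_trans)
      then show ?thesis using best_v True by (auto simp: covered_def)
    qed (use expanded best_other in \<open>auto simp: covered_def\<close>)
  qed
qed (use assms(2) in \<open>auto simp: covered_def\<close>)

lemma complete_init: "complete (bs_init goal A)"
  unfolding complete_def bs_init_def covered_def by auto

lemma complete_step:
  assumes "complete \<sigma>" "step \<sigma> \<sigma>'"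
  shows "complete \<sigma>'"
proof -
  have "covered \<sigma>' w (fst bb + p w w', snd bb + q w w')"
    if edge: "(w, w') \<in> E" "w \<in> A" and best: "bs_best \<sigma>' w' = Some bb" for w w' bb
    using assms(2)
  proof cases
    case (expand x v gp gq)
    show ?thesis
    proof (cases "w' = v")
      case True
      let ?C = "{(w, gp + p w v, gq + q w v) | w. (w, v) \<in> E \<and> w \<in> A}"
      have "(w, gp + p w v, gq + q w v) \<in># bs_open \<sigma> - {#x#} + mset_set ?C"
        unfolding union_iff using edge True by (auto simp: finite_children)
      moreover have "bs_open \<sigma>' = bs_open \<sigma> - {#x#} + mset_set ?C" using expand by simp
      ultimately have "(w, gp + p w v, gq + q w v) \<in># bs_open \<sigma>'" by (simp only:)
      moreover have "bb = (gp, gq)" using best True expand by simp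
      ultimately show ?thesis unfolding covered_def using True by force
    next
      case False
      then have "bs_best \<sigma> w' = Some bb" using expand best by simp
      then show ?thesis using assms(1) edge covered_step[OF assms(2)] unfolding complete_def by blast
    qed
  qed (use assms(1) edge best covered_step[OF assms(2)] in \<open>auto simp: complete_def\<close>)
  moreover have "\<forall>y\<in>#bs_open \<sigma>'. ereal (fst (bkey h y)) > B" if "bs_halted \<sigma>'"
    using assms(2) that
  proof cases
    case (stop x)
    have "fst (bkey h x) \<le> fst (bkey h y)" if "y \<in># bs_open \<sigma>" for y
      using stop that by (metis less_eq_prod_def eq_iff less_imp_le prod.collapse)
    then show ?thesis using stop by (auto intro: less_le_trans)
  qed (use assms(1) in \<open>auto simp: complete_def\<close>)
  ultimately show ?thesis using assms covered_step unfolding complete_def by blast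
qed

lemma complete_edge:
  "complete \<sigma> \<Longrightarrow> (w, w') \<in> E \<Longrightarrow> w \<in> A \<Longrightarrow> bs_best \<sigma> w' = Some (a, b) \<Longrightarrow>
    covered \<sigma> w (a + p w w', b + q w w')"
  unfolding complete_def by fastforce

lemma reachable_complete: "reachable \<sigma> \<Longrightarrow> complete \<sigma>"
  by (induction rule: rtranclp_induct) (auto intro: complete_init complete_step)

lemma covered_halted:
  assumes "complete \<sigma>" "bs_halted \<sigma>" "covered \<sigma> w val" "ereal (fst val + h w) \<le> B"
  shows "\<exists>bb. bs_best \<sigma> w = Some bb \<and> bb \<le> val"
proof -
  have "ereal (a + h w) \<le> B" if "(a, b) \<le> val" for a b
  proof -
    have "a \<le> fst val" using that by (cases val) auto
    then have "ereal (a + h w) \<le> ereal (fst val + h w)" by simp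
    then show ?thesis using assms(4) by (rule order_trans)
  qed
  then have "\<nexists>a b. (w, a, b) \<in># bs_open \<sigma> \<and> (a, b) \<le> val"
    using assms(1,2) unfolding complete_def bkey_def by fastforce
  then show ?thesis using assms(3) unfolding covered_def by blast
qed

lemma best_le_path_cost:
  assumes "reachable \<sigma>" "bs_halted \<sigma>"
  shows "is_path E u goal \<rho> \<Longrightarrow> set \<rho> \<subseteq> A \<Longrightarrow>
    \<forall>k<length \<rho>. ereal (pcost p (drop k \<rho>) + h (\<rho> ! k)) \<le> B \<Longrightarrow>
    \<exists>bb. bs_best \<sigma> u = Some bb \<and> bb \<le> (pcost p \<rho>, pcost q \<rho>)"
proof (induction \<rho> arbitrary: u)
  case (Cons u0 \<rho>')
  have complete: "complete \<sigma>" using reachable_complete[OF assms(1)] .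
  have u0: "u0 = u" using Cons.prems(1) unfolding is_path_def by simp
  have bound: "ereal (pcost p (u0 # \<rho>') + h u) \<le> B" using Cons.prems(3) u0 by (auto dest: spec[of _ 0])
  have "covered \<sigma> u (pcost p (u0 # \<rho>'), pcost q (u0 # \<rho>'))"
  proof (cases \<rho>')
    case Nil
    then have "u = goal" using Cons.prems(1) u0 by simp
    then show ?thesis using complete Cons.prems(2) u0 Nil unfolding complete_def by auto
  next
    case (Cons w r)
    have edge: "(u, w) \<in> E" and path: "is_path E w goal \<rho>'"
      using Cons.prems(1) u0 Cons by (auto simp: is_path_Cons)
    have "\<forall>k<length \<rho>'. ereal (pcost p (drop k \<rho>') + h (\<rho>' ! k)) \<le> B"
    proof (intro allI impI)
      fix k assume "k < length \<rho>'"
      then show "ereal (pcost p (drop k \<rho>') + h (\<rho>' ! k)) \<le> B"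
        using Cons.prems(3)[rule_format, of "Suc k"] by simp
    qed
    then obtain a b where bb: "bs_best \<sigma> w = Some (a, b)" "(a, b) \<le> (pcost p \<rho>', pcost q \<rho>')"
      using Cons.IH[OF path] Cons.prems(2) by (metis set_subset_Cons subset_trans surj_pair)
    have "covered \<sigma> u (a + p u w, b + q u w)"
      using complete_edge[OF complete edge _ bb(1)] Cons.prems(2) u0 by simp
    moreover have "(a + p u w, b + q u w) \<le> (pcost p (u0 # \<rho>'), pcost q (u0 # \<rho>'))"
      using lex_add_mono[OF bb(2), of "p u w" "q u w"] Cons u0 by (simp add: add.commute)
    ultimately show ?thesis by (rule covered_mono)
  qed
  moreover have "ereal (fst (pcost p (u0 # \<rho>'), pcost q (u0 # \<rho>')) + h u) \<le> B" using bound by simp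
  ultimately show ?case by (rule covered_halted[OF complete assms(2)])
qed (simp add: is_path_def)

lemma path_expanded:
  assumes "reachable \<sigma>" "bs_halted \<sigma>" "is_path E u goal \<rho>" "set \<rho> \<subseteq> A"
    and "\<forall>k<length \<rho>. ereal (pcost p (drop k \<rho>) + h (\<rho> ! k)) \<le> B"
  shows "set \<rho> \<subseteq> bs_expanded \<sigma>"
proof
  fix x assume "x \<in> set \<rho>"
  then obtain k where k: "k < length \<rho>" "\<rho> ! k = x" by (meson in_set_conv_nth)
  have "\<forall>j<length (drop k \<rho>). ereal (pcost p (drop j (drop k \<rho>)) + h (drop k \<rho> ! j)) \<le> B"
  proof (intro allI impI)
    fix j assume "j < length (drop k \<rho>)"
    then have "k + j < length \<rho>" by simp
    then show "ereal (pcost p (drop j (drop k \<rho>)) + h (drop k \<rho> ! j)) \<le> B"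
      using assms(5) k(1) by (simp add: add.commute)
  qed
  moreover have "set (drop k \<rho>) \<subseteq> A" using assms(4) by (meson order_trans set_drop_subset)
  ultimately show "x \<in> bs_expanded \<sigma>"
    using best_le_path_cost[OF assms(1,2) is_path_drop[OF assms(3) k(1)]] k(2)
    unfolding bs_expanded_def by auto
qed

lemma path_expanded_if_admissible:
  assumes "reachable \<sigma>" "bs_halted \<sigma>" "admissible E p start h"
    and x: "is_path E start u x" and \<rho>: "is_path E u goal \<rho>" "set \<rho> \<subseteq> A"
    and "ereal (pcost p x + pcost p \<rho>) \<le> B"
  shows "set \<rho> \<subseteq> bs_expanded \<sigma>"
proof (rule path_expanded[OF assms(1,2) \<rho>], intro allI impI)
  fix k assume k: "k < length \<rho>"
  have prefix: "is_path E u (\<rho> ! k) (take (Suc k) \<rho>)" using is_path_take[OF \<rho>(1) k] .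
  then have "h (\<rho> ! k) \<le> pcost p (x @ tl (take (Suc k) \<rho>))"
    using assms(3) is_path_append_tl[OF x] unfolding admissible_def by blast
  also have "\<dots> = pcost p x + pcost p (take (Suc k) \<rho>)"
    using x prefix unfolding is_path_def by (intro pcost_append_tl) auto
  finally have "pcost p (drop k \<rho>) + h (\<rho> ! k) \<le> pcost p x + pcost p \<rho>"
    using pcost_take_drop[OF k, of p] by linarith
  then have "ereal (pcost p (drop k \<rho>) + h (\<rho> ! k)) \<le> ereal (pcost p x + pcost p \<rho>)" by simp
  then show "ereal (pcost p (drop k \<rho>) + h (\<rho> ! k)) \<le> B" using assms(7) by (rule order_trans)
qed

end

section \<open>The constrained search and its termination\<close>

definition ms_children :: "('a \<times> 'a) set \<Rightarrow> ('a \<Rightarrow> 'a \<Rightarrow> real) \<Rightarrow> ('a \<Rightarrow> 'a \<Rightarrow> real) \<Rightarrow> real \<Rightarrow> 'a set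
   \<Rightarrow> ('a \<Rightarrow> real) \<Rightarrow> ('a \<Rightarrow> real) \<Rightarrow> ('a \<Rightarrow> ereal) \<Rightarrow> ereal \<Rightarrow> 'a list \<Rightarrow> 'a list set" where
  "ms_children E c1 c2 W X h1 h2 gm F x = {x @ [v] | v. (last x, v) \<in> E \<and> v \<in> X \<and>
     \<not> (ereal (pcost c2 x + c2 (last x) v) \<ge> gm v) \<and>
     \<not> (ereal (pcost c1 x + c1 (last x) v + h1 v) > F) \<and>
     \<not> (pcost c2 x + c2 (last x) v + h2 v > W)}"

definition ms_update :: "('a \<Rightarrow> 'a \<Rightarrow> real) \<Rightarrow> ('a \<Rightarrow> 'a \<Rightarrow> real) \<Rightarrow> real \<Rightarrow> ('a \<Rightarrow> real)
   \<Rightarrow> ('a \<Rightarrow> real) \<Rightarrow> ('a \<Rightarrow> real) \<Rightarrow> 'a list \<Rightarrow> 'a ms \<Rightarrow> ereal \<times> ereal \<times> 'a list option" where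
  "ms_update c1 c2 W h1 ub1 ub2 x \<sigma> =
    (let u = last x; fx1 = pcost c1 x + h1 u; fa' = pcost c1 x + ub1 u; fb' = pcost c2 x + ub2 u
     in if fb' \<le> W then
          (if ereal fx1 < ms_f1bar \<sigma> \<or> ereal fb' < ms_f2sol \<sigma>
           then (ereal fx1, ereal fb', Some x) else (ms_f1bar \<sigma>, ms_f2sol \<sigma>, ms_sol \<sigma>))
        else if ereal fa' < ms_f1bar \<sigma> then (ereal fa', \<infinity>, ms_sol \<sigma>)
        else (ms_f1bar \<sigma>, ms_f2sol \<sigma>, ms_sol \<sigma>))"

lemma ms_process_simps:
  shows "ms_halted (ms_process E c1 c2 W X h1 h2 ub1 ub2 x \<sigma>) = ms_halted \<sigma>"
    and "ms_gmin (ms_process E c1 c2 W X h1 h2 ub1 ub2 x \<sigma>) = (ms_gmin \<sigma>)(last x := ereal (pcost c2 x))"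
    and "ms_f1bar (ms_process E c1 c2 W X h1 h2 ub1 ub2 x \<sigma>) = fst (ms_update c1 c2 W h1 ub1 ub2 x \<sigma>)"
    and "ms_f2sol (ms_process E c1 c2 W X h1 h2 ub1 ub2 x \<sigma>) = fst (snd (ms_update c1 c2 W h1 ub1 ub2 x \<sigma>))"
    and "ms_sol (ms_process E c1 c2 W X h1 h2 ub1 ub2 x \<sigma>) = snd (snd (ms_update c1 c2 W h1 ub1 ub2 x \<sigma>))"
    and "ms_open (ms_process E c1 c2 W X h1 h2 ub1 ub2 x \<sigma>) = ms_open \<sigma> - {#x#} +
          (if h1 (last x) = ub1 (last x) then {#} else mset_set (ms_children E c1 c2 W X h1 h2
             ((ms_gmin \<sigma>)(last x := ereal (pcost c2 x))) (fst (ms_update c1 c2 W h1 ub1 ub2 x \<sigma>)) x))"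
  unfolding ms_process_def Let_def ms_children_def[symmetric] by (simp_all add: ms_update_def Let_def)

lemma finite_ms_children: "finite E \<Longrightarrow> finite (ms_children E c1 c2 W X h1 h2 gm F x)"
proof -
  assume "finite E"
  moreover have "ms_children E c1 c2 W X h1 h2 gm F x \<subseteq> (\<lambda>v. x @ [v]) ` snd ` E"
    unfolding ms_children_def by force
  ultimately show ?thesis by (meson finite_imageI finite_subset)
qed

lemma ms_update_cases:
  fixes ca cb :: "'a \<Rightarrow> 'a \<Rightarrow> real" and x :: "'a list" and ha ua ub :: "'a \<Rightarrow> real"
  defines "fx \<equiv> pcost ca x + ha (last x)"
    and "fa \<equiv> pcost ca x + ua (last x)"
    and "fb \<equiv> pcost cb x + ub (last x)"
  obtains (solution) "fb \<le> W" "ereal fx < ms_f1bar \<sigma> \<or> ereal fb < ms_f2sol \<sigma>"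
       "ms_update ca cb W ha ua ub x \<sigma> = (ereal fx, ereal fb, Some x)"
  | (bound) "\<not> fb \<le> W" "ereal fa < ms_f1bar \<sigma>"
       "ms_update ca cb W ha ua ub x \<sigma> = (ereal fa, \<infinity>, ms_sol \<sigma>)"
  | (unchanged) "ms_update ca cb W ha ua ub x \<sigma> = (ms_f1bar \<sigma>, ms_f2sol \<sigma>, ms_sol \<sigma>)"
       "fb \<le> W \<Longrightarrow> \<not> (ereal fx < ms_f1bar \<sigma> \<or> ereal fb < ms_f2sol \<sigma>)"
       "\<not> fb \<le> W \<Longrightarrow> \<not> ereal fa < ms_f1bar \<sigma>"
  unfolding fx_def fa_def fb_def ms_update_def Let_def
  by (cases "pcost cb x + ub (last x) \<le> W") (auto split: if_splits)

locale constrained_search =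
  fixes E :: "('a \<times> 'a) set" and c1 c2 :: "'a \<Rightarrow> 'a \<Rightarrow> real" and W :: real
    and X :: "'a set" and h1 h2 ub1 ub2 :: "'a \<Rightarrow> real" and start :: 'a and F0 :: ereal
  assumes finite_E: "finite E" and nonneg_c2: "nonneg E c2"
begin

abbreviation "step \<equiv> ms_step E c1 c2 W X h1 h2 ub1 ub2"

abbreviation "process \<equiv> ms_process E c1 c2 W X h1 h2 ub1 ub2"

abbreviation "reachable \<sigma> \<equiv> step\<^sup>*\<^sup>* (ms_init start X F0) \<sigma>"

text \<open>Every proper prefix of an open node has been processed with a c2-cost no larger than its
  own; so a node returning to one of its states is pruned, open nodes are distinct paths, and each
  processing step lowers g_min at one of finitely many (state, cost) pairs.\<close>

definition open_paths_sound :: "'a ms \<Rightarrow> bool" where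
  "open_paths_sound \<sigma> \<longleftrightarrow> (\<forall>y\<in>#ms_open \<sigma>. is_path E start (last y) y \<and> distinct y \<and>
      (\<forall>k. 0 < k \<and> k < length y \<longrightarrow> ms_gmin \<sigma> (last (take k y)) \<le> ereal (pcost c2 (take k y))))"

definition labels :: "('a \<times> real) set" where
  "labels = (\<lambda>y. (last y, pcost c2 y)) ` {y. (\<exists>v. is_path E start v y) \<and> distinct y}"

definition improvable :: "'a ms \<Rightarrow> ('a \<times> real) set" where
  "improvable \<sigma> = {(v, a) \<in> labels. ereal a < ms_gmin \<sigma> v}"

definition step_measure :: "('a ms \<times> 'a ms) set" where
  "step_measure = measures [\<lambda>\<sigma>. if ms_halted \<sigma> then 0 else 1, \<lambda>\<sigma>. card (improvable \<sigma>),
     \<lambda>\<sigma>. size (ms_open \<sigma>)]"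

lemma finite_labels: "finite labels"
  unfolding labels_def using finite_distinct_paths_from[OF finite_E] by blast

lemma open_paths_sound_init: "open_paths_sound (ms_init start X F0)"
  unfolding open_paths_sound_def ms_init_def by (auto simp: is_path_def)

lemma child_distinct:
  assumes "open_paths_sound \<sigma>" "x \<in># ms_open \<sigma>" "ereal (pcost c2 x) < ms_gmin \<sigma> (last x)"
    and "(last x, v) \<in> E" "\<not> ereal (pcost c2 x + c2 (last x) v) \<ge> ((ms_gmin \<sigma>)(last x := ereal (pcost c2 x))) v"
  shows "v \<notin> set x"
proof
  assume "v \<in> set x"
  then obtain j where j: "j < length x" "x ! j = v" by (meson in_set_conv_nth)
  have path: "is_path E start (last x) x"
    and prefixes: "\<And>k. 0 < k \<Longrightarrow> k < length x \<Longrightarrow> ms_gmin \<sigma> (last (take k x)) \<le> ereal (pcost c2 (take k x))"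
    using assms(1,2) unfolding open_paths_sound_def by auto
  have last_prefix: "last (take (Suc j) x) = v" using j by (simp add: take_Suc_conv_app_nth)
  have "((ms_gmin \<sigma>)(last x := ereal (pcost c2 x))) v \<le> ereal (pcost c2 x)"
  proof (cases "Suc j = length x")
    case True
    then show ?thesis using last_prefix by simp
  next
    case False
    then have "ms_gmin \<sigma> v \<le> ereal (pcost c2 (take (Suc j) x))" using prefixes[of "Suc j"] j last_prefix by simp
    also have "\<dots> \<le> ereal (pcost c2 x)"
      using pcost_take_le[OF nonneg_c2] path unfolding is_path_def by simp
    finally show ?thesis using assms(3) by (auto simp: less_imp_le)
  qed
  also have "\<dots> \<le> ereal (pcost c2 x + c2 (last x) v)" using nonneg_c2 assms(4) unfolding nonneg_def by auto
  finally show False using assms(5) by simp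
qed

lemma open_paths_sound_process:
  assumes sound: "open_paths_sound \<sigma>" and x: "x \<in># ms_open \<sigma>"
    and improves: "ereal (pcost c2 x) < ms_gmin \<sigma> (last x)"
  shows "open_paths_sound (process x \<sigma>)"
proof -
  define gm where "gm = (ms_gmin \<sigma>)(last x := ereal (pcost c2 x))"
  have gm_le: "gm v \<le> ms_gmin \<sigma> v" for v
    using improves unfolding gm_def by (auto simp: less_imp_le)
  have x_path: "is_path E start (last x) x"
    and x_prefixes: "\<And>k. 0 < k \<Longrightarrow> k < length x \<Longrightarrow> ms_gmin \<sigma> (last (take k x)) \<le> ereal (pcost c2 (take k x))"
    using sound x unfolding open_paths_sound_def by auto
  have "is_path E start (last y) y \<and> distinct y \<and>
      (\<forall>k. 0 < k \<and> k < length y \<longrightarrow> gm (last (take k y)) \<le> ereal (pcost c2 (take k y)))"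
    if "y \<in># ms_open \<sigma>" for y
    using sound that gm_le unfolding open_paths_sound_def by (meson order_trans)
  moreover have "is_path E start (last y) y \<and> distinct y \<and>
      (\<forall>k. 0 < k \<and> k < length y \<longrightarrow> gm (last (take k y)) \<le> ereal (pcost c2 (take k y)))"
    if child: "y \<in> ms_children E c1 c2 W X h1 h2 gm F x" for y F
  proof -
    obtain v where y: "y = x @ [v]" and edge: "(last x, v) \<in> E"
      and pruned: "\<not> (ereal (pcost c2 x + c2 (last x) v) \<ge> gm v)"
      using child unfolding ms_children_def by blast
    have "v \<notin> set x" using child_distinct[OF sound x improves edge] pruned unfolding gm_def .
    moreover have "gm (last (take k y)) \<le> ereal (pcost c2 (take k y))" if "0 < k" "k < length y" for k
    proof (cases "k = length x")
      case False
      then have "k < length x" "take k y = take k x" using that y by auto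
      then show ?thesis using x_prefixes[OF \<open>0 < k\<close>] gm_le by (metis order_trans)
    qed (use y x_path in \<open>simp add: gm_def is_path_def\<close>)
    ultimately show ?thesis
      using is_path_snoc[OF x_path edge] sound x y unfolding open_paths_sound_def by auto
  qed
  ultimately show ?thesis
    unfolding open_paths_sound_def ms_process_simps gm_def[symmetric]
    using finite_ms_children[OF finite_E] by (auto split: if_splits dest: in_diffD)
qed

lemma open_paths_sound_step:
  assumes "open_paths_sound \<sigma>" "step \<sigma> \<sigma>'"
  shows "open_paths_sound \<sigma>'"
  using assms(2)
proof cases
  case (process x)
  then show ?thesis using open_paths_sound_process assms(1) by (simp add: not_le)
qed (use assms(1) in \<open>auto simp: open_paths_sound_def dest: in_diffD\<close>)

lemma step_decreases:
  assumes "open_paths_sound \<sigma>" "step \<sigma> \<sigma>'"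
  shows "(\<sigma>', \<sigma>) \<in> step_measure"
  using assms(2)
proof cases
  case (discard x)
  then show ?thesis unfolding step_measure_def improvable_def
    by (intro measures_lesseq measures_less) (auto simp: size_Diff1_less)
next
  case (process x)
  have improves: "ereal (pcost c2 x) < ms_gmin \<sigma> (last x)" using process by (simp add: not_le)
  have gmin: "ms_gmin \<sigma>' = (ms_gmin \<sigma>)(last x := ereal (pcost c2 x))"
    using process ms_process_simps(2) by metis
  have "improvable \<sigma>' \<subseteq> improvable \<sigma>"
  proof -
    have "ereal b < ms_gmin \<sigma> (last x)" if "b < pcost c2 x" for b
      using that improves by (metis less_ereal.simps(1) less_trans)
    then show ?thesis unfolding improvable_def gmin by (auto split: if_splits)
  qed
  moreover have "(last x, pcost c2 x) \<in> improvable \<sigma> - improvable \<sigma>'"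
    using assms(1) process improves unfolding open_paths_sound_def improvable_def labels_def gmin by auto
  moreover have "finite (improvable \<sigma>)"
    using finite_labels unfolding improvable_def by (rule finite_subset[rotated]) auto
  ultimately have "card (improvable \<sigma>') < card (improvable \<sigma>)" by (metis psubset_card_mono psubsetI DiffD2 DiffD1)
  then show ?thesis unfolding step_measure_def using process ms_process_simps(1)
    by (intro measures_lesseq measures_less) auto
qed (auto simp: step_measure_def)

lemma step_exists:
  fixes \<sigma> :: "'a ms"
  assumes "\<not> ms_halted \<sigma>"
  shows "\<exists>\<sigma>'. step \<sigma> \<sigma>'"
proof (cases "ms_open \<sigma> = {#}")
  case False
  then obtain x where x: "x \<in># ms_open \<sigma>" "\<forall>y\<in>#ms_open \<sigma>. mkey c1 c2 h1 h2 x \<le> mkey c1 c2 h1 h2 y"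
    using mset_arg_min_exists by blast
  show ?thesis
  proof (cases "ereal (fst (mkey c1 c2 h1 h2 x)) > ms_f1bar \<sigma>")
    case False
    then show ?thesis
      using ms_step.discard[OF assms x False] ms_step.process[OF assms x False] by blast
  qed (use ms_step.stop[OF assms x] in blast)
qed (use ms_step.empty[OF assms] in blast)

lemma ms_terminates: "run_terminates step ms_halted (ms_init start X F0)"
  by (rule run_terminatesI[of open_paths_sound _ _ step_measure])
    (use open_paths_sound_init open_paths_sound_step step_decreases step_exists
      in \<open>auto simp: step_measure_def\<close>)

end

section \<open>Optimality of the constrained search\<close>

locale constrained_search_optimal = constrained_search E c1 c2 W X h1 h2 ub1 ub2 start F0
  for E c1 c2 W X h1 h2 ub1 ub2 start F0 +
  fixes goal :: 'a and \<pi>0 :: "'a list"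
  assumes nonneg_c1: "nonneg E c1"
    and h1_consistent: "\<And>v w. v \<in> X \<Longrightarrow> w \<in> X \<Longrightarrow> (v, w) \<in> E \<Longrightarrow> h1 v \<le> c1 v w + h1 w"
    and h2_consistent: "\<And>v w. v \<in> X \<Longrightarrow> w \<in> X \<Longrightarrow> (v, w) \<in> E \<Longrightarrow> h2 v \<le> c2 v w + h2 w"
    and h1_lower: "\<And>v r. is_path E v goal r \<Longrightarrow> set r \<subseteq> X \<Longrightarrow> h1 v \<le> pcost c1 r"
    and h2_lower: "\<And>v r. is_path E v goal r \<Longrightarrow> set r \<subseteq> X \<Longrightarrow> h2 v \<le> pcost c2 r"
    and h1_ub2_attained:
      "\<And>v. v \<in> X \<Longrightarrow> \<exists>q. is_path E v goal q \<and> pcost c1 q = h1 v \<and> pcost c2 q = ub2 v"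
    and ub1_h2_attained: "\<And>v x. v \<in> X \<Longrightarrow> is_path E start v x \<Longrightarrow> pcost c2 x + h2 v \<le> W \<Longrightarrow>
      \<exists>q. is_path E v goal q \<and> pcost c1 q = ub1 v \<and> pcost c2 q = h2 v"
    and ub2_le_h2: "\<And>v x. v \<in> X \<Longrightarrow> is_path E start v x \<Longrightarrow> pcost c2 x + h2 v \<le> W \<Longrightarrow>
      h1 v = ub1 v \<Longrightarrow> ub2 v \<le> h2 v"
    and h1_goal: "h1 goal = ub1 goal"
    and optimal: "cost_optimal E c1 c2 W start goal \<pi>0"
    and optimal_in_X: "set \<pi>0 \<subseteq> X"
    and F0_ge: "ereal (pcost c1 \<pi>0) \<le> F0"
begin

abbreviation "g1 \<equiv> pcost c1"
abbreviation "g2 \<equiv> pcost c2"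
abbreviation "key \<equiv> mkey c1 c2 h1 h2"
abbreviation "o1 \<equiv> g1 \<pi>0"
abbreviation "o2 \<equiv> g2 \<pi>0"

lemma optimal_path: "is_path E start goal \<pi>0" and o2_le_W: "o2 \<le> W"
  using optimal unfolding cost_optimal_def by auto

lemma optimal_le: "is_path E start goal \<pi> \<Longrightarrow> g2 \<pi> \<le> W \<Longrightarrow> (o1, o2) \<le> (g1 \<pi>, g2 \<pi>)"
  using optimal unfolding cost_optimal_def by auto

lemma fst_key: "fst (key y) = g1 y + h1 (last y)"
  by (simp add: mkey_def)

lemma key_fst_le: "key z \<le> key y \<Longrightarrow> g1 z + h1 (last z) \<le> g1 y + h1 (last y)"
  unfolding mkey_def by auto

lemma key_le_of:
  "g1 a + h1 (last a) \<le> g1 b + h1 (last b) \<Longrightarrow> g2 a + h2 (last a) \<le> g2 b + h2 (last b) \<Longrightarrow> key a \<le> key b"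
  unfolding mkey_def by simp

definition feasible :: "'a list \<Rightarrow> bool" where
  "feasible y \<longleftrightarrow> is_path E start (last y) y \<and> set y \<subseteq> X \<and> g2 y + h2 (last y) \<le> W"

definition optimal_completion :: "'a list \<Rightarrow> 'a list \<Rightarrow> bool" where
  "optimal_completion y r \<longleftrightarrow> is_path E (last y) goal r \<and> set r \<subseteq> X \<and> g1 y + g1 r = o1 \<and> g2 y + g2 r = o2"

definition optimum_recorded :: "'a ms \<Rightarrow> bool" where
  "optimum_recorded \<sigma> \<longleftrightarrow> ms_f1bar \<sigma> = ereal o1 \<and> ms_f2sol \<sigma> = ereal o2"

definition solution_sound :: "'a ms \<Rightarrow> bool" where
  "solution_sound \<sigma> \<longleftrightarrow> (ms_f2sol \<sigma> \<noteq> \<infinity> \<longrightarrow> (\<exists>x. ms_sol \<sigma> = Some x \<and> feasible x \<and>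
     ms_f1bar \<sigma> = ereal (g1 x + h1 (last x)) \<and> ms_f2sol \<sigma> = ereal (g2 x + ub2 (last x)) \<and>
     g2 x + ub2 (last x) \<le> W))"

definition open_or_dominated :: "'a ms \<Rightarrow> 'a list set \<Rightarrow> 'a list \<Rightarrow> bool" where
  "open_or_dominated \<sigma> P c \<longleftrightarrow> c \<in># ms_open \<sigma> \<or> (\<exists>z\<in>P. last z = last c \<and> g1 z \<le> g1 c \<and> g2 z \<le> g2 c)"

text \<open>P is the ghost set of processed nodes. Until the optimum is recorded, each processed node
  with an optimal completion has the next node of that completion open or dominated by a processed
  node. Since [start] is open or dominated, following the optimal path from start leads to an open
  node of key at most o1, which cannot survive the halting test.\<close>

definition search_inv :: "'a ms \<Rightarrow> 'a list set \<Rightarrow> bool" where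
  "search_inv \<sigma> P \<longleftrightarrow>
    (\<forall>y. y \<in># ms_open \<sigma> \<or> y \<in> P \<longrightarrow> feasible y) \<and>
    (\<forall>z\<in>P. \<forall>y\<in>#ms_open \<sigma>. key z \<le> key y) \<and>
    (\<forall>v. ms_gmin \<sigma> v \<noteq> \<infinity> \<longrightarrow> (\<exists>z\<in>P. last z = v \<and> ms_gmin \<sigma> v = ereal (g2 z))) \<and>
    ereal o1 \<le> ms_f1bar \<sigma> \<and> solution_sound \<sigma> \<and> open_or_dominated \<sigma> P [start] \<and>
    (\<forall>z\<in>P. \<forall>r. optimal_completion z r \<longrightarrow>
       optimum_recorded \<sigma> \<or> (\<exists>w r'. r = last z # w # r' \<and> open_or_dominated \<sigma> P (z @ [w]))) \<and>
    (ms_halted \<sigma> \<longrightarrow> (\<forall>y\<in>#ms_open \<sigma>. ereal (fst (key y)) > ms_f1bar \<sigma>))"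

lemma search_invI:
  assumes "\<And>y. y \<in># ms_open \<sigma> \<or> y \<in> P \<Longrightarrow> feasible y"
    and "\<And>z y. z \<in> P \<Longrightarrow> y \<in># ms_open \<sigma> \<Longrightarrow> key z \<le> key y"
    and "\<And>v. ms_gmin \<sigma> v \<noteq> \<infinity> \<Longrightarrow> \<exists>z\<in>P. last z = v \<and> ms_gmin \<sigma> v = ereal (g2 z)"
    and "ereal o1 \<le> ms_f1bar \<sigma>" and "solution_sound \<sigma>" and "open_or_dominated \<sigma> P [start]"
    and "\<And>z r. z \<in> P \<Longrightarrow> optimal_completion z r \<Longrightarrow>
      optimum_recorded \<sigma> \<or> (\<exists>w r'. r = last z # w # r' \<and> open_or_dominated \<sigma> P (z @ [w]))"
    and "\<And>y. ms_halted \<sigma> \<Longrightarrow> y \<in># ms_open \<sigma> \<Longrightarrow> ereal (fst (key y)) > ms_f1bar \<sigma>"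
  shows "search_inv \<sigma> P"
  using assms unfolding search_inv_def by blast

lemma search_invD:
  assumes "search_inv \<sigma> P"
  shows "y \<in># ms_open \<sigma> \<or> y \<in> P \<Longrightarrow> feasible y"
    and "z \<in> P \<Longrightarrow> y \<in># ms_open \<sigma> \<Longrightarrow> key z \<le> key y"
    and "ms_gmin \<sigma> v \<noteq> \<infinity> \<Longrightarrow> \<exists>z\<in>P. last z = v \<and> ms_gmin \<sigma> v = ereal (g2 z)"
    and "ereal o1 \<le> ms_f1bar \<sigma>" and "solution_sound \<sigma>" and "open_or_dominated \<sigma> P [start]"
    and "z \<in> P \<Longrightarrow> optimal_completion z r \<Longrightarrow>
      optimum_recorded \<sigma> \<or> (\<exists>w r'. r = last z # w # r' \<and> open_or_dominated \<sigma> P (z @ [w]))"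
    and "ms_halted \<sigma> \<Longrightarrow> y \<in># ms_open \<sigma> \<Longrightarrow> ereal (fst (key y)) > ms_f1bar \<sigma>"
  using assms unfolding search_inv_def by blast+

lemma feasible_ne: "feasible y \<Longrightarrow> y \<noteq> []"
  unfolding feasible_def is_path_def by simp

lemma feasible_last_in_X:
  assumes "feasible y"
  shows "last y \<in> X"
  using assms feasible_ne[OF assms] unfolding feasible_def by (meson last_in_set subsetD)

lemma opt_le_h1_ub2:
  assumes "feasible x" "g2 x + ub2 (last x) \<le> W"
  shows "(o1, o2) \<le> (g1 x + h1 (last x), g2 x + ub2 (last x))"
proof -
  obtain q where q: "is_path E (last x) goal q" "g1 q = h1 (last x)" "g2 q = ub2 (last x)"
    using h1_ub2_attained[OF feasible_last_in_X[OF assms(1)]] by blast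
  have path: "is_path E start goal (x @ tl q)"
    using is_path_append_tl[OF _ q(1)] assms(1) unfolding feasible_def by blast
  have "g1 (x @ tl q) = g1 x + h1 (last x)" "g2 (x @ tl q) = g2 x + ub2 (last x)"
    using q feasible_ne[OF assms(1)] unfolding is_path_def by (auto simp: pcost_append_tl)
  then show ?thesis using optimal_le[OF path] assms(2) by simp
qed

lemma opt_le_ub1_h2:
  assumes "feasible x"
  shows "(o1, o2) \<le> (g1 x + ub1 (last x), g2 x + h2 (last x))"
proof -
  have x: "is_path E start (last x) x" "g2 x + h2 (last x) \<le> W" using assms unfolding feasible_def by auto
  obtain q where q: "is_path E (last x) goal q" "g1 q = ub1 (last x)" "g2 q = h2 (last x)"
    using ub1_h2_attained[OF feasible_last_in_X[OF assms] x] by blast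
  have path: "is_path E start goal (x @ tl q)" using is_path_append_tl[OF x(1) q(1)] .
  have "g1 (x @ tl q) = g1 x + ub1 (last x)" "g2 (x @ tl q) = g2 x + h2 (last x)"
    using q feasible_ne[OF assms] unfolding is_path_def by (auto simp: pcost_append_tl)
  then show ?thesis using optimal_le[OF path] x(2) by simp
qed

lemma optimal_completion_key_le:
  assumes "optimal_completion c r"
  shows "g1 c + h1 (last c) \<le> o1" "g2 c + h2 (last c) \<le> o2"
  using assms h1_lower[of "last c" r] h2_lower[of "last c" r] unfolding optimal_completion_def by auto

lemma optimal_completion_dominated:
  assumes "optimal_completion c r" "feasible z" "last z = last c" "g1 z \<le> g1 c" "g2 z \<le> g2 c"
  shows "optimal_completion z r"
proof -
  have r: "is_path E (last c) goal r" "g1 c + g1 r = o1" "g2 c + g2 r = o2"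
    using assms(1) unfolding optimal_completion_def by auto
  have "is_path E start goal (z @ tl r)"
    using is_path_append_tl assms(2,3) r(1) unfolding feasible_def by metis
  moreover have "g1 (z @ tl r) = g1 z + g1 r" "g2 (z @ tl r) = g2 z + g2 r"
    using r(1) assms(3) feasible_ne[OF assms(2)] unfolding is_path_def by (auto intro: pcost_append_tl)
  moreover have "g2 z + g2 r \<le> W" using assms(5) r(3) o2_le_W by linarith
  ultimately have "(o1, o2) \<le> (g1 z + g1 r, g2 z + g2 r)" using optimal_le by metis
  then have "g1 z + g1 r = o1 \<and> g2 z + g2 r = o2" using assms(4,5) r(2,3) by auto
  then show ?thesis using assms(1,3) unfolding optimal_completion_def by simp
qed

lemma optimal_completion_snoc:
  assumes "optimal_completion z (last z # w # r')" "feasible z"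
  shows "optimal_completion (z @ [w]) (w # r')"
proof -
  have "is_path E w goal (w # r')" using assms(1) unfolding optimal_completion_def by (simp add: is_path_Cons)
  moreover have "g1 (z @ [w]) = g1 z + c1 (last z) w" "g2 (z @ [w]) = g2 z + c2 (last z) w"
    using pcost_snoc[OF feasible_ne[OF assms(2)]] by auto
  ultimately show ?thesis using assms(1) unfolding optimal_completion_def by auto
qed

lemma optimal_completion_start: "optimal_completion [start] \<pi>0"
  using optimal_path optimal_in_X unfolding optimal_completion_def is_path_def by auto

lemma start_in_X: "start \<in> X"
  using optimal_path optimal_in_X unfolding is_path_def by (cases \<pi>0) auto

lemma feasible_start: "feasible [start]"
  using h2_lower[OF optimal_path optimal_in_X] o2_le_W start_in_X unfolding feasible_def by simp

lemma search_inv_init: "search_inv (ms_init start X F0) {}"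
  by (rule search_invI)
    (use feasible_start F0_ge start_in_X in \<open>auto simp: ms_init_def open_or_dominated_def solution_sound_def\<close>)

lemma children_feasible:
  assumes "feasible x" "y \<in> ms_children E c1 c2 W X h1 h2 gm F x"
  shows "feasible y" "key x \<le> key y"
proof -
  obtain v where y: "y = x @ [v]" "(last x, v) \<in> E" "v \<in> X"
    and bound: "\<not> (g2 x + c2 (last x) v + h2 v > W)"
    using assms(2) unfolding ms_children_def by blast
  have cost: "g1 y = g1 x + c1 (last x) v" "g2 y = g2 x + c2 (last x) v"
    using pcost_snoc[OF feasible_ne[OF assms(1)]] y(1) by auto
  show "feasible y"
    using is_path_snoc[of E start "last x" x v] assms(1) y bound cost unfolding feasible_def by auto
  show "key x \<le> key y"
    using h1_consistent[OF feasible_last_in_X[OF assms(1)] y(3,2)]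
      h2_consistent[OF feasible_last_in_X[OF assms(1)] y(3,2)] cost y(1)
    by (intro key_le_of) auto
qed

lemma search_inv_empty:
  assumes "search_inv \<sigma> P" "ms_open \<sigma> = {#}"
  shows "search_inv (\<sigma>\<lparr>ms_halted := True\<rparr>) P"
  using assms unfolding search_inv_def open_or_dominated_def optimum_recorded_def solution_sound_def
  by simp

lemma open_or_dominated_remove:
  assumes "open_or_dominated \<sigma> P c" "optimal_completion c r" "ereal (fst (key x)) > ms_f1bar \<sigma>"
    and "ereal o1 \<le> ms_f1bar \<sigma>" "ms_open \<sigma>' = ms_open \<sigma> - {#x#}"
  shows "open_or_dominated \<sigma>' P c"
proof -
  have "ereal (fst (key c)) \<le> ereal o1" using optimal_completion_key_le(1)[OF assms(2)] unfolding fst_key by simp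
  then have "c \<noteq> x" using assms(3,4) by (metis leD order_trans)
  then show ?thesis using assms(1,5) unfolding open_or_dominated_def by (simp add: in_diff_count)
qed

lemma search_inv_stop:
  assumes inv: "search_inv \<sigma> P" and x_min: "\<forall>y\<in>#ms_open \<sigma>. key x \<le> key y"
    and above: "ereal (fst (key x)) > ms_f1bar \<sigma>"
  shows "search_inv (\<sigma>\<lparr>ms_open := ms_open \<sigma> - {#x#}, ms_halted := True\<rparr>) P" (is "search_inv ?\<sigma> P")
proof (rule search_invI)
  have remove: "open_or_dominated ?\<sigma> P c" if "open_or_dominated \<sigma> P c" "optimal_completion c r" for c r
    using open_or_dominated_remove[OF that above search_invD(4)[OF inv]] by simp
  show "open_or_dominated ?\<sigma> P [start]"
    using remove[OF search_invD(6)[OF inv] optimal_completion_start] .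
  show "optimum_recorded ?\<sigma> \<or> (\<exists>w r'. r = last z # w # r' \<and> open_or_dominated ?\<sigma> P (z @ [w]))"
    if z: "z \<in> P" "optimal_completion z r" for z r
  proof -
    have "optimum_recorded \<sigma> \<or> (\<exists>w r'. r = last z # w # r' \<and> open_or_dominated \<sigma> P (z @ [w]))"
      using search_invD(7)[OF inv z] .
    moreover have "optimal_completion (z @ [w]) (w # r')" if "r = last z # w # r'" for w r'
      using optimal_completion_snoc z(2) search_invD(1)[OF inv] z(1) that by blast
    ultimately show ?thesis using remove unfolding optimum_recorded_def by auto
  qed
  show "ereal (fst (key y)) > ms_f1bar ?\<sigma>" if "y \<in># ms_open ?\<sigma>" for y
  proof -
    have "key x \<le> key y" using x_min that by (simp add: in_diffD)
    then show ?thesis using above key_fst_le unfolding fst_key by (simp add: less_le_trans)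
  qed
qed (use search_invD[OF inv] in \<open>auto simp: solution_sound_def dest: in_diffD\<close>)

lemma open_or_dominated_discard:
  assumes inv: "search_inv \<sigma> P" and x: "x \<in># ms_open \<sigma>" and pruned: "ereal (g2 x) \<ge> ms_gmin \<sigma> (last x)"
    and "open_or_dominated \<sigma> P c"
  shows "open_or_dominated (\<sigma>\<lparr>ms_open := ms_open \<sigma> - {#x#}\<rparr>) P c"
proof (cases "c = x")
  case True
  have "ms_gmin \<sigma> (last x) \<noteq> \<infinity>" using pruned by auto
  then obtain z where z: "z \<in> P" "last z = last x" "ms_gmin \<sigma> (last x) = ereal (g2 z)"
    using search_invD(3)[OF inv] by blast
  have "g1 z \<le> g1 x" using key_fst_le[OF search_invD(2)[OF inv z(1) x]] z(2) by simp
  then show ?thesis using True z pruned unfolding open_or_dominated_def by auto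
qed (use assms(4) in \<open>auto simp: open_or_dominated_def in_diff_count\<close>)

lemma search_inv_discard:
  assumes inv: "search_inv \<sigma> P" and "\<not> ms_halted \<sigma>" and x: "x \<in># ms_open \<sigma>"
    and "ereal (g2 x) \<ge> ms_gmin \<sigma> (last x)"
  shows "search_inv (\<sigma>\<lparr>ms_open := ms_open \<sigma> - {#x#}\<rparr>) P"
proof (rule search_invI)
  show "optimum_recorded (\<sigma>\<lparr>ms_open := ms_open \<sigma> - {#x#}\<rparr>) \<or>
    (\<exists>w r'. r = last z # w # r' \<and> open_or_dominated (\<sigma>\<lparr>ms_open := ms_open \<sigma> - {#x#}\<rparr>) P (z @ [w]))"
    if "z \<in> P" "optimal_completion z r" for z r
    using search_invD(7)[OF inv that] open_or_dominated_discard[OF assms(1,3,4)]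
    unfolding optimum_recorded_def by auto
qed (use search_invD[OF inv] assms(2) open_or_dominated_discard[OF assms(1,3,4)]
    in \<open>auto simp: solution_sound_def dest: in_diffD\<close>)


context
  fixes \<sigma> :: "'a ms" and P x
  assumes inv: "search_inv \<sigma> P" and x_open: "x \<in># ms_open \<sigma>"
    and x_min: "\<forall>y\<in>#ms_open \<sigma>. key x \<le> key y"
    and x_within: "\<not> ereal (fst (key x)) > ms_f1bar \<sigma>"
begin

lemma x_feasible: "feasible x"
  using search_invD(1)[OF inv] x_open by blast

lemma process_f1bar_ge_opt: "ereal o1 \<le> ms_f1bar (process x \<sigma>)"
proof (cases rule: ms_update_cases[where ca=c1 and cb=c2 and x=x and ha=h1 and ua=ub1 and ub=ub2
      and W=W and \<sigma>=\<sigma>])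
  case solution
  then show ?thesis using opt_le_h1_ub2[OF x_feasible] by (auto simp: ms_process_simps)
next
  case bound
  then show ?thesis using opt_le_ub1_h2[OF x_feasible] by (auto simp: ms_process_simps)
qed (use search_invD(4)[OF inv] in \<open>simp add: ms_process_simps\<close>)

lemma process_solution_sound: "solution_sound (process x \<sigma>)"
proof (cases rule: ms_update_cases[where ca=c1 and cb=c2 and x=x and ha=h1 and ua=ub1 and ub=ub2
      and W=W and \<sigma>=\<sigma>])
  case unchanged
  then show ?thesis using search_invD(5)[OF inv] unfolding solution_sound_def by (simp add: ms_process_simps)
qed (use x_feasible in \<open>simp_all add: solution_sound_def ms_process_simps\<close>)

lemma process_keeps_optimum:
  assumes "optimum_recorded \<sigma>"
  shows "optimum_recorded (process x \<sigma>)"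
proof (cases rule: ms_update_cases[where ca=c1 and cb=c2 and x=x and ha=h1 and ua=ub1 and ub=ub2
      and W=W and \<sigma>=\<sigma>])
  case solution
  moreover have "g1 x + h1 (last x) \<le> o1" using x_within assms unfolding optimum_recorded_def fst_key by simp
  ultimately show ?thesis using opt_le_h1_ub2[OF x_feasible] assms
    unfolding optimum_recorded_def by (auto simp: ms_process_simps)
next
  case bound
  then show ?thesis using opt_le_ub1_h2[OF x_feasible] assms
    unfolding optimum_recorded_def by (auto simp: ms_process_simps)
qed (use assms in \<open>simp add: optimum_recorded_def ms_process_simps\<close>)

lemma open_or_dominated_process:
  assumes "open_or_dominated \<sigma> P c"
  shows "open_or_dominated (process x \<sigma>) (insert x P) c"
proof (cases "c \<in># ms_open \<sigma> \<and> c \<noteq> x")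
  case True
  then show ?thesis unfolding open_or_dominated_def ms_process_simps by (simp add: in_diff_count)
qed (use assms in \<open>auto simp: open_or_dominated_def\<close>)

text \<open>States with h1 = ub1 are not expanded, so for them the optimum has to be recorded at once.\<close>

lemma terminal_records_optimum:
  assumes terminal: "h1 (last x) = ub1 (last x)" and "optimal_completion x r"
  shows "optimum_recorded (process x \<sigma>)"
proof -
  have x: "is_path E start (last x) x" "g2 x + h2 (last x) \<le> W" using x_feasible unfolding feasible_def by auto
  have r: "is_path E (last x) goal r" "set r \<subseteq> X" "g1 x + g1 r = o1" "g2 x + g2 r = o2"
    using assms(2) unfolding optimal_completion_def by auto
  have "ub2 (last x) \<le> h2 (last x)" using ub2_le_h2[OF feasible_last_in_X[OF x_feasible] x terminal] .
  then have within_W: "g2 x + ub2 (last x) \<le> W" and "g2 x + ub2 (last x) \<le> o2"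
    using x(2) h2_lower[OF r(1,2)] r(4) by auto
  moreover have "g1 x + h1 (last x) \<le> o1" using h1_lower[OF r(1,2)] r(3) by simp
  ultimately have opt: "g1 x + h1 (last x) = o1" "g2 x + ub2 (last x) = o2"
    using opt_le_h1_ub2[OF x_feasible within_W] by auto
  show ?thesis
  proof (cases rule: ms_update_cases[where ca=c1 and cb=c2 and x=x and ha=h1 and ua=ub1 and ub=ub2
        and W=W and \<sigma>=\<sigma>])
    case solution
    then show ?thesis using opt by (simp add: optimum_recorded_def ms_process_simps)
  next
    case bound
    then show ?thesis using within_W by simp
  next
    case unchanged
    then have f1: "ms_f1bar \<sigma> = ereal o1" and f2: "ms_f2sol \<sigma> \<le> ereal o2"
      using within_W opt search_invD(4)[OF inv] by auto
    then obtain y where y: "feasible y" "ms_f1bar \<sigma> = ereal (g1 y + h1 (last y))"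
      "ms_f2sol \<sigma> = ereal (g2 y + ub2 (last y))" "g2 y + ub2 (last y) \<le> W"
      using search_invD(5)[OF inv] unfolding solution_sound_def by fastforce
    then have "o2 \<le> g2 y + ub2 (last y)" using opt_le_h1_ub2[OF y(1,4)] f1 by auto
    then show ?thesis using unchanged(1) f1 f2 y(3) by (simp add: optimum_recorded_def ms_process_simps)
  qed
qed

lemma child_open_or_dominated:
  assumes not_terminal: "h1 (last x) \<noteq> ub1 (last x)" and edge: "(last x, w) \<in> E" and "w \<in> X"
    and completion: "optimal_completion (x @ [w]) r"
  shows "open_or_dominated (process x \<sigma>) (insert x P) (x @ [w])"
proof -
  have child_cost: "g1 (x @ [w]) = g1 x + c1 (last x) w" "g2 (x @ [w]) = g2 x + c2 (last x) w"
    using pcost_snoc[OF feasible_ne[OF x_feasible]] by auto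
  have below_opt: "g1 x + c1 (last x) w + h1 w \<le> o1" "g2 x + c2 (last x) w + h2 w \<le> o2"
    using optimal_completion_key_le[OF completion] child_cost by auto
  show ?thesis
  proof (cases "ereal (g2 x + c2 (last x) w) \<ge> ((ms_gmin \<sigma>)(last x := ereal (g2 x))) w")
    case False
    have "ereal (g1 x + c1 (last x) w + h1 w) \<le> ereal o1" using below_opt(1) by simp
    then have "ereal (g1 x + c1 (last x) w + h1 w) \<le> ms_f1bar (process x \<sigma>)"
      using process_f1bar_ge_opt by (rule order_trans)
    then have "x @ [w] \<in> ms_children E c1 c2 W X h1 h2 ((ms_gmin \<sigma>)(last x := ereal (g2 x)))
        (ms_f1bar (process x \<sigma>)) x"
      unfolding ms_children_def using False edge \<open>w \<in> X\<close> below_opt(2) o2_le_W by (auto simp: not_less)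
    then have "x @ [w] \<in># ms_open (process x \<sigma>)"
      using not_terminal finite_ms_children[OF finite_E] unfolding ms_process_simps by simp
    then show ?thesis unfolding open_or_dominated_def by blast
  next
    case pruned: True
    show ?thesis
    proof (cases "w = last x")
      case True
      have "c1 (last x) w \<ge> 0" "c2 (last x) w \<ge> 0" using nonneg_c1 nonneg_c2 edge unfolding nonneg_def by auto
      then show ?thesis using True child_cost unfolding open_or_dominated_def by auto
    next
      case False
      then have gmin_w: "ms_gmin \<sigma> w \<le> ereal (g2 (x @ [w]))" using pruned child_cost by simp
      then obtain z where z: "z \<in> P" "last z = w" "ms_gmin \<sigma> w = ereal (g2 z)"
        using search_invD(3)[OF inv] by force
      have "key x \<le> key (x @ [w])"
        using h1_consistent[OF _ _ edge] h2_consistent[OF _ _ edge] feasible_last_in_X[OF x_feasible]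
          \<open>w \<in> X\<close> child_cost by (intro key_le_of) auto
      then have "key z \<le> key (x @ [w])" by (rule order_trans[OF search_invD(2)[OF inv z(1) x_open]])
      then have "g1 z \<le> g1 (x @ [w])" using key_fst_le z(2) by force
      moreover have "g2 z \<le> g2 (x @ [w])" using gmin_w z(3) by simp
      ultimately show ?thesis using z(1,2) unfolding open_or_dominated_def by auto
    qed
  qed
qed

lemma successor_open_or_dominated:
  assumes not_terminal: "h1 (last x) \<noteq> ub1 (last x)" and completion: "optimal_completion x r"
  shows "\<exists>w r'. r = last x # w # r' \<and> open_or_dominated (process x \<sigma>) (insert x P) (x @ [w])"
proof -
  have r: "is_path E (last x) goal r" "set r \<subseteq> X"
    using completion unfolding optimal_completion_def by auto
  have "last x \<noteq> goal" using not_terminal h1_goal by auto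
  then obtain w r' where wr: "r = last x # w # r'"
    using r(1) unfolding is_path_def by (metis last_ConsL list.collapse)
  then have "(last x, w) \<in> E" "w \<in> X" using r by (auto simp: is_path_Cons)
  moreover have "optimal_completion (x @ [w]) (w # r')"
    using optimal_completion_snoc x_feasible completion wr by simp
  ultimately show ?thesis using child_open_or_dominated[OF not_terminal] wr by blast
qed

lemma search_inv_process:
  assumes "\<not> ms_halted \<sigma>"
  shows "search_inv (process x \<sigma>) (insert x P)"
proof (rule search_invI)
  have open_cases: "y \<in># ms_open \<sigma> \<or> y \<in> ms_children E c1 c2 W X h1 h2
      ((ms_gmin \<sigma>)(last x := ereal (g2 x))) (ms_f1bar (process x \<sigma>)) x"
    if "y \<in># ms_open (process x \<sigma>)" for y
    using that finite_ms_children[OF finite_E] unfolding ms_process_simps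
    by (auto split: if_splits dest: in_diffD)
  show "feasible y" if "y \<in># ms_open (process x \<sigma>) \<or> y \<in> insert x P" for y
    using that open_cases search_invD(1)[OF inv] x_feasible children_feasible(1)[OF x_feasible] by blast
  show "key z \<le> key y" if "z \<in> insert x P" "y \<in># ms_open (process x \<sigma>)" for z y
  proof -
    have "key z \<le> key x" using that(1) search_invD(2)[OF inv _ x_open] by auto
    moreover have "key x \<le> key y" using open_cases[OF that(2)] x_min children_feasible(2)[OF x_feasible] by blast
    ultimately show ?thesis by (rule order_trans)
  qed
  show "\<exists>z\<in>insert x P. last z = v \<and> ms_gmin (process x \<sigma>) v = ereal (g2 z)"
    if "ms_gmin (process x \<sigma>) v \<noteq> \<infinity>" for v
    using that search_invD(3)[OF inv] unfolding ms_process_simps by auto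
  show "optimum_recorded (process x \<sigma>) \<or>
      (\<exists>w r'. r = last z # w # r' \<and> open_or_dominated (process x \<sigma>) (insert x P) (z @ [w]))"
    if "z \<in> insert x P" "optimal_completion z r" for z r
  proof (cases "z = x")
    case True
    then show ?thesis using terminal_records_optimum successor_open_or_dominated that(2) by blast
  next
    case False
    then show ?thesis using search_invD(7)[OF inv _ that(2)] that(1)
      process_keeps_optimum open_or_dominated_process by blast
  qed
qed (use assms process_f1bar_ge_opt process_solution_sound open_or_dominated_process search_invD(6)[OF inv]
    in \<open>simp_all add: ms_process_simps(1)\<close>)

end

lemma search_inv_step:
  assumes "search_inv \<sigma> P" "step \<sigma> \<sigma>'"
  shows "\<exists>P'. search_inv \<sigma>' P'"
  using assms(2)
proof cases
  case empty
  then show ?thesis using search_inv_empty[OF assms(1)] by blast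
next
  case (stop x)
  then show ?thesis using search_inv_stop[OF assms(1)] by blast
next
  case (discard x)
  then show ?thesis using search_inv_discard[OF assms(1)] by blast
next
  case (process x)
  then show ?thesis using search_inv_process[OF assms(1)] by blast
qed

lemma reachable_search_inv: "reachable \<sigma> \<Longrightarrow> \<exists>P. search_inv \<sigma> P"
  by (induction rule: rtranclp_induct) (use search_inv_init search_inv_step in blast)+

lemma halted_no_optimal_completion:
  assumes inv: "search_inv \<sigma> P" and "ms_halted \<sigma>" "\<not> optimum_recorded \<sigma>"
  shows "length r = n \<Longrightarrow> y \<in># ms_open \<sigma> \<or> y \<in> P \<Longrightarrow> \<not> optimal_completion y r"
proof (induction n arbitrary: y r rule: less_induct)
  case (less n)
  show ?case
  proof
    assume completion: "optimal_completion y r"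
    from less.prems(2) show False
    proof
      assume "y \<in># ms_open \<sigma>"
      then have "ereal (fst (key y)) > ms_f1bar \<sigma>" using search_invD(8)[OF inv assms(2)] by blast
      moreover have "ereal (fst (key y)) \<le> ereal o1"
        using optimal_completion_key_le(1)[OF completion] unfolding fst_key by simp
      ultimately show False using search_invD(4)[OF inv] by (meson leD order_trans)
    next
      assume y: "y \<in> P"
      then obtain w r' where wr: "r = last y # w # r'" "open_or_dominated \<sigma> P (y @ [w])"
        using search_invD(7)[OF inv y completion] assms(3) by blast
      have next_completion: "optimal_completion (y @ [w]) (w # r')"
        using optimal_completion_snoc completion wr(1) search_invD(1)[OF inv] y by blast
      have shorter: "length (w # r') < n" using less.prems(1) wr(1) by simp
      from wr(2) show False
        unfolding open_or_dominated_def
      proof (elim disjE bexE conjE)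
        assume "y @ [w] \<in># ms_open \<sigma>"
        then show False using less.IH[OF shorter refl] next_completion by blast
      next
        fix z assume "z \<in> P" "last z = last (y @ [w])" "g1 z \<le> g1 (y @ [w])" "g2 z \<le> g2 (y @ [w])"
        moreover have "feasible z" using search_invD(1)[OF inv] \<open>z \<in> P\<close> by blast
        ultimately show False
          using less.IH[OF shorter refl] optimal_completion_dominated[OF next_completion] by blast
      qed
    qed
  qed
qed

lemma halted_records_optimum:
  assumes "reachable \<sigma>" "ms_halted \<sigma>"
  shows "\<exists>x. ms_sol \<sigma> = Some x \<and> feasible x \<and> g1 x + h1 (last x) = o1 \<and> g2 x + ub2 (last x) = o2"
proof -
  obtain P where inv: "search_inv \<sigma> P" using reachable_search_inv[OF assms(1)] by blast
  have recorded: "optimum_recorded \<sigma>"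
  proof (rule ccontr)
    assume not_recorded: "\<not> optimum_recorded \<sigma>"
    have "\<exists>y. (y \<in># ms_open \<sigma> \<or> y \<in> P) \<and> optimal_completion y \<pi>0"
      using search_invD(6)[OF inv] search_invD(1)[OF inv]
        optimal_completion_dominated[OF optimal_completion_start] optimal_completion_start
      unfolding open_or_dominated_def by blast
    then show False using halted_no_optimal_completion[OF inv assms(2) not_recorded refl] by blast
  qed
  then show ?thesis using search_invD(5)[OF inv] unfolding solution_sound_def optimum_recorded_def by force
qed

theorem search_result_optimal:
  assumes "reachable \<sigma>" "ms_halted \<sigma>"
  shows "\<exists>x. ms_sol \<sigma> = Some x \<and>
    (\<exists>q. is_path E (last x) goal q \<and> g1 q = h1 (last x) \<and> g2 q = ub2 (last x)) \<and>
    (\<forall>q. is_path E (last x) goal q \<and> g1 q = h1 (last x) \<and> g2 q = ub2 (last x) \<longrightarrow>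
       cost_optimal E c1 c2 W start goal (x @ tl q))"
proof -
  obtain x where x: "ms_sol \<sigma> = Some x" "feasible x" "g1 x + h1 (last x) = o1" "g2 x + ub2 (last x) = o2"
    using halted_records_optimum[OF assms] by blast
  have "cost_optimal E c1 c2 W start goal (x @ tl q)"
    if q: "is_path E (last x) goal q" "g1 q = h1 (last x)" "g2 q = ub2 (last x)" for q
  proof -
    have "is_path E start goal (x @ tl q)"
      using is_path_append_tl[OF _ q(1)] x(2) unfolding feasible_def by blast
    moreover have "g1 (x @ tl q) = o1" "g2 (x @ tl q) = o2"
      using pcost_append_tl[OF feasible_ne[OF x(2)]] q x(3,4) unfolding is_path_def by auto
    ultimately show ?thesis using optimal_le o2_le_W unfolding cost_optimal_def by auto
  qed
  then show ?thesis using x(1) h1_ub2_attained[OF feasible_last_in_X[OF x(2)]] by blast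
qed

end

section \<open>The heuristics computed by the initial searches\<close>

lemma bdd_below_pcost: "nonneg E c \<Longrightarrow> bdd_below {pcost c p | p. is_path E u goal p \<and> Q p}"
  using pcost_nonneg unfolding is_path_def bdd_below_def by blast

lemma h2v_le: "nonneg E c2 \<Longrightarrow> is_path E u goal r \<Longrightarrow> h2v E c2 goal u \<le> pcost c2 r"
  unfolding h2v_def by (rule cInf_lower) (use bdd_below_pcost[of E c2 u goal "\<lambda>_. True"] in auto)

lemma h1v_le: "nonneg E c1 \<Longrightarrow> is_path E u goal r \<Longrightarrow> set r \<subseteq> Y \<Longrightarrow> h1v E c1 goal Y u \<le> pcost c1 r"
  unfolding h1v_def by (rule cInf_lower) (use bdd_below_pcost[of E c1 u goal "\<lambda>p. set p \<subseteq> Y"] in auto)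

lemma ub2v_le:
  assumes "nonneg E c2" "is_path E u goal r" "set r \<subseteq> Y" "pcost c1 r = h1v E c1 goal Y u"
  shows "ub2v E c1 c2 goal Y u \<le> pcost c2 r"
  unfolding ub2v_def
  by (rule cInf_lower)
    (use assms bdd_below_pcost[of E c2 u goal "\<lambda>p. set p \<subseteq> Y \<and> pcost c1 p = h1v E c1 goal Y u"] in auto)

lemma lexmin_Inf:
  fixes f g :: "'b \<Rightarrow> real"
  assumes "Q q" "\<And>p. Q p \<Longrightarrow> (f q, g q) \<le> (f p, g p)"
  shows "Inf {f p | p. Q p} = f q" and "Inf {g p | p. Q p \<and> f p = f q} = g q"
proof -
  have "f q \<le> f p" and "f p = f q \<Longrightarrow> g q \<le> g p" if "Q p" for p
    using assms(2)[OF that] by (auto simp: less_imp_le)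
  then show "Inf {f p | p. Q p} = f q" and "Inf {g p | p. Q p \<and> f p = f q} = g q"
    by (auto intro!: cInf_eq_minimum simp: assms(1))
qed

lemma h2v_ub1v_attained:
  assumes "finite E" "nonneg E c1" "nonneg E c2" "is_path E u goal p1"
  shows "\<exists>q. is_path E u goal q \<and> pcost c2 q = h2v E c2 goal u \<and> pcost c1 q = ub1v E c1 c2 goal u"
proof -
  have "\<exists>q. is_path E u goal q \<and>
      (\<forall>p. is_path E u goal p \<longrightarrow> (pcost c2 q, pcost c1 q) \<le> (pcost c2 p, pcost c1 p))"
    by (rule lexmin_path_exists[OF assms(1,3,2)]) (use assms(4) in auto)
  then obtain q where q: "is_path E u goal q"
    "\<And>p. is_path E u goal p \<Longrightarrow> (pcost c2 q, pcost c1 q) \<le> (pcost c2 p, pcost c1 p)" by blast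
  note Inf = lexmin_Inf[of "is_path E u goal" q "pcost c2" "pcost c1", OF q]
  have "h2v E c2 goal u = pcost c2 q" unfolding h2v_def using Inf(1) .
  moreover from this have "ub1v E c1 c2 goal u = pcost c1 q" unfolding ub1v_def using Inf(2) by simp
  ultimately show ?thesis using q(1) by auto
qed

lemma h1v_ub2v_attained:
  assumes "finite E" "nonneg E c1" "nonneg E c2" "is_path E u goal p1" "set p1 \<subseteq> Y"
  shows "\<exists>q. is_path E u goal q \<and> set q \<subseteq> Y \<and> pcost c1 q = h1v E c1 goal Y u \<and>
    pcost c2 q = ub2v E c1 c2 goal Y u"
proof -
  let ?Q = "\<lambda>p. is_path E u goal p \<and> set p \<subseteq> Y"
  have "\<exists>q. ?Q q \<and> (\<forall>p. ?Q p \<longrightarrow> (pcost c1 q, pcost c2 q) \<le> (pcost c1 p, pcost c2 p))"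
    by (rule lexmin_path_exists[OF assms(1-3)]) (use assms(4,5) in auto)
  then obtain q where q: "?Q q" "\<And>p. ?Q p \<Longrightarrow> (pcost c1 q, pcost c2 q) \<le> (pcost c1 p, pcost c2 p)" by blast
  note Inf = lexmin_Inf[of ?Q q "pcost c1" "pcost c2", OF q]
  have "h1v E c1 goal Y u = pcost c1 q" unfolding h1v_def using Inf(1) by simp
  moreover from this have "ub2v E c1 c2 goal Y u = pcost c2 q"
    unfolding ub2v_def using Inf(2) by (simp add: conj_assoc)
  ultimately show ?thesis using q(1) by auto
qed

lemma h1v_consistent:
  assumes "finite E" "nonneg E c1" "nonneg E c2" "(v, w) \<in> E" "v \<in> Y" "is_path E w goal \<rho>" "set \<rho> \<subseteq> Y"
  shows "h1v E c1 goal Y v \<le> c1 v w + h1v E c1 goal Y w"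
proof -
  obtain q where q: "is_path E w goal q" "set q \<subseteq> Y" "pcost c1 q = h1v E c1 goal Y w"
    using h1v_ub2v_attained[OF assms(1-3,6,7)] by blast
  then obtain t where t: "q = w # t" unfolding is_path_def by (cases q) auto
  have "is_path E v goal (v # q)" using q(1) assms(4) t by (simp add: is_path_Cons)
  then have "h1v E c1 goal Y v \<le> pcost c1 (v # q)" using h1v_le[OF assms(2)] q(2) assms(5) by simp
  then show ?thesis using q(3) t by simp
qed

lemma h2v_consistent:
  assumes "finite E" "nonneg E c1" "nonneg E c2" "(v, w) \<in> E" "is_path E w goal \<rho>"
  shows "h2v E c2 goal v \<le> c2 v w + h2v E c2 goal w"
proof -
  obtain q where q: "is_path E w goal q" "pcost c2 q = h2v E c2 goal w"
    using h2v_ub1v_attained[OF assms(1-3,5)] by blast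
  then obtain t where t: "q = w # t" unfolding is_path_def by (cases q) auto
  have "is_path E v goal (v # q)" using q(1) assms(4) t by (simp add: is_path_Cons)
  then have "h2v E c2 goal v \<le> pcost c2 (v # q)" using h2v_le[OF assms(3)] by simp
  then show ?thesis using q(2) t by simp
qed

lemma h1v_goal:
  assumes "finite E" "nonneg E c1" "nonneg E c2" "goal \<in> Y"
  shows "h1v E c1 goal Y goal = 0"
proof -
  have path: "is_path E goal goal [goal]" by simp
  obtain q where "is_path E goal goal q" "pcost c1 q = h1v E c1 goal Y goal"
    using h1v_ub2v_attained[OF assms(1-3) path] assms(4) by auto
  then have "h1v E c1 goal Y goal \<ge> 0" using pcost_nonneg[OF assms(2)] unfolding is_path_def by metis
  moreover have "h1v E c1 goal Y goal \<le> 0" using h1v_le[OF assms(2) path] assms(4) by simp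
  ultimately show ?thesis by simp
qed

lemma ub1v_goal:
  assumes "finite E" "nonneg E c1" "nonneg E c2"
  shows "ub1v E c1 c2 goal goal = 0"
proof -
  have path: "is_path E goal goal [goal]" by simp
  obtain q where q: "is_path E goal goal q" "pcost c2 q = h2v E c2 goal goal"
    "pcost c1 q = ub1v E c1 c2 goal goal"
    using h2v_ub1v_attained[OF assms path] by blast
  have "h2v E c2 goal goal = 0"
    using h2v_le[OF assms(3) path] q(1,2) pcost_nonneg[OF assms(3)] unfolding is_path_def by force
  then have "ub1v E c1 c2 goal goal \<le> pcost c1 [goal]"
    unfolding ub1v_def
    by (intro cInf_lower) (use bdd_below_pcost[OF assms(2), of goal goal] path in fastforce)+
  moreover have "ub1v E c1 c2 goal goal \<ge> 0" using pcost_nonneg[OF assms(2)] q(1,3) unfolding is_path_def by metis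
  ultimately show ?thesis by simp
qed

lemma optimum_le_ub1v:
  assumes "finite E" "nonneg E c1" "nonneg E c2" "cost_optimal E c1 c2 W start goal \<pi>0"
  shows "pcost c1 \<pi>0 \<le> ub1v E c1 c2 goal start"
proof -
  have \<pi>0: "is_path E start goal \<pi>0" "pcost c2 \<pi>0 \<le> W" using assms(4) unfolding cost_optimal_def by auto
  obtain q where q: "is_path E start goal q" "pcost c2 q = h2v E c2 goal start"
    "pcost c1 q = ub1v E c1 c2 goal start"
    using h2v_ub1v_attained[OF assms(1-3) \<pi>0(1)] by blast
  have "pcost c2 q \<le> W" using h2v_le[OF assms(3) \<pi>0(1)] q(2) \<pi>0(2) by simp
  then have "(pcost c1 \<pi>0, pcost c2 \<pi>0) \<le> (pcost c1 q, pcost c2 q)"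
    using assms(4) q(1) unfolding cost_optimal_def by blast
  then show ?thesis using q(3) by auto
qed

lemma ub2v_le_h2v:
  assumes "finite E" "nonneg E c1" "nonneg E c2" "is_path E v goal \<rho>"
    and covers: "\<And>q. is_path E v goal q \<Longrightarrow> pcost c2 x + pcost c2 q \<le> W \<Longrightarrow> set q \<subseteq> Y"
    and "pcost c2 x + h2v E c2 goal v \<le> W" "h1v E c1 goal Y v = ub1v E c1 c2 goal v"
  shows "ub2v E c1 c2 goal Y v \<le> h2v E c2 goal v"
proof -
  obtain q where q: "is_path E v goal q" "pcost c2 q = h2v E c2 goal v" "pcost c1 q = ub1v E c1 c2 goal v"
    using h2v_ub1v_attained[OF assms(1-4)] by blast
  have "set q \<subseteq> Y" using covers[OF q(1)] assms(6) q(2) by simp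
  then show ?thesis using ub2v_le[OF assms(3) q(1)] q(2,3) assms(7) by simp
qed

lemma wc_constrained_search_optimal:
  assumes finite_E: "finite E" and nonneg: "nonneg E c1" "nonneg E c2"
    and X1_covers: "\<And>u x \<rho>. is_path E start u x \<Longrightarrow> is_path E u goal \<rho> \<Longrightarrow>
      pcost c2 x + pcost c2 \<rho> \<le> W \<Longrightarrow> set \<rho> \<subseteq> X1"
    and X2_paths: "\<And>v. v \<in> X2 \<Longrightarrow> \<exists>\<rho>. is_path E v goal \<rho> \<and> set \<rho> \<subseteq> X1"
    and opt: "cost_optimal E c1 c2 W start goal \<pi>0" "set \<pi>0 \<subseteq> X2" "ereal (pcost c1 \<pi>0) \<le> F0"
  shows "constrained_search_optimal E c1 c2 W X2 (h1v E c1 goal X1) (h2v E c2 goal) (ub1v E c1 c2 goal)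
    (ub2v E c1 c2 goal X1) start F0 goal \<pi>0"
proof -
  have X2_X1: "v \<in> X1" if v: "v \<in> X2" for v
  proof -
    obtain \<rho> where "is_path E v goal \<rho>" "set \<rho> \<subseteq> X1" using X2_paths[OF v] by blast
    then show ?thesis unfolding is_path_def by (auto dest: hd_in_set)
  qed
  have "goal \<in> set \<pi>0" using opt(1) unfolding cost_optimal_def is_path_def by auto
  then have "goal \<in> X1" using opt(2) X2_X1 by blast
  show ?thesis
  proof (unfold_locales)
    fix v w assume vw: "v \<in> X2" "w \<in> X2" "(v, w) \<in> E"
    obtain \<rho> where \<rho>: "is_path E w goal \<rho>" "set \<rho> \<subseteq> X1" using X2_paths[OF vw(2)] by blast
    show "h1v E c1 goal X1 v \<le> c1 v w + h1v E c1 goal X1 w"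
      using h1v_consistent[OF finite_E nonneg vw(3) X2_X1[OF vw(1)] \<rho>] .
    show "h2v E c2 goal v \<le> c2 v w + h2v E c2 goal w"
      using h2v_consistent[OF finite_E nonneg vw(3) \<rho>(1)] .
  next
    fix v r assume r: "is_path E v goal r" "set r \<subseteq> X2"
    then have "set r \<subseteq> X1" using X2_X1 by blast
    then show "h1v E c1 goal X1 v \<le> pcost c1 r" using h1v_le[OF nonneg(1) r(1)] by simp
    show "h2v E c2 goal v \<le> pcost c2 r" using h2v_le[OF nonneg(2) r(1)] .
  next
    fix v assume "v \<in> X2"
    then obtain \<rho> where \<rho>: "is_path E v goal \<rho>" "set \<rho> \<subseteq> X1" using X2_paths by blast
    show "\<exists>q. is_path E v goal q \<and> pcost c1 q = h1v E c1 goal X1 v \<and> pcost c2 q = ub2v E c1 c2 goal X1 v"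
      using h1v_ub2v_attained[OF finite_E nonneg \<rho>] by blast
    show "\<exists>q. is_path E v goal q \<and> pcost c1 q = ub1v E c1 c2 goal v \<and> pcost c2 q = h2v E c2 goal v"
      using h2v_ub1v_attained[OF finite_E nonneg \<rho>(1)] by blast
  next
    fix v x assume v: "v \<in> X2" and x: "is_path E start v x"
      and bounds: "pcost c2 x + h2v E c2 goal v \<le> W" "h1v E c1 goal X1 v = ub1v E c1 c2 goal v"
    obtain \<rho> where \<rho>: "is_path E v goal \<rho>" using X2_paths[OF v] by blast
    have covers: "set q \<subseteq> X1" if "is_path E v goal q" "pcost c2 x + pcost c2 q \<le> W" for q
      using X1_covers[OF x that] .
    show "ub2v E c1 c2 goal X1 v \<le> h2v E c2 goal v"
      by (rule ub2v_le_h2v[OF finite_E nonneg \<rho> covers bounds])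
  next
    show "h1v E c1 goal X1 goal = ub1v E c1 c2 goal goal"
      using h1v_goal[OF finite_E nonneg \<open>goal \<in> X1\<close>] ub1v_goal[OF finite_E nonneg] by simp
  qed (simp_all only: finite_E nonneg opt)
qed

lemma wc_astar_result_optimal:
  assumes finite_E: "finite E" and nonneg: "nonneg E c1" "nonneg E c2"
    and adm: "admissible E c2 start hb2" "admissible E c1 start hb1"
    and feasible: "\<exists>\<pi>. is_path E start goal \<pi> \<and> pcost c2 \<pi> \<le> W"
    and phase1: "(bs_step E c2 c1 hb2 UNIV (ereal W))\<^sup>*\<^sup>* (bs_init goal UNIV) \<sigma>1" "bs_halted \<sigma>1"
    and F0: "F0 = (if start \<in> bs_expanded \<sigma>1 then ereal (ub1v E c1 c2 goal start) else \<infinity>)"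
    and phase2: "(bs_step E c1 c2 hb1 (bs_expanded \<sigma>1) F0)\<^sup>*\<^sup>* (bs_init goal (bs_expanded \<sigma>1)) \<sigma>2"
      "bs_halted \<sigma>2"
    and search: "(ms_step E c1 c2 W (bs_expanded \<sigma>2) (h1v E c1 goal (bs_expanded \<sigma>1)) (h2v E c2 goal)
        (ub1v E c1 c2 goal) (ub2v E c1 c2 goal (bs_expanded \<sigma>1)))\<^sup>*\<^sup>* (ms_init start (bs_expanded \<sigma>2) F0) \<sigma>"
      "ms_halted \<sigma>"
  shows "\<exists>x. ms_sol \<sigma> = Some x \<and>
    (\<exists>q. is_path E (last x) goal q \<and> pcost c1 q = h1v E c1 goal (bs_expanded \<sigma>1) (last x) \<and>
       pcost c2 q = ub2v E c1 c2 goal (bs_expanded \<sigma>1) (last x)) \<and>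
    (\<forall>q. is_path E (last x) goal q \<and> pcost c1 q = h1v E c1 goal (bs_expanded \<sigma>1) (last x) \<and>
       pcost c2 q = ub2v E c1 c2 goal (bs_expanded \<sigma>1) (last x) \<longrightarrow>
       cost_optimal E c1 c2 W start goal (x @ tl q))"
proof -
  obtain \<pi>0 where opt: "cost_optimal E c1 c2 W start goal \<pi>0"
    using optimal_path_exists[OF finite_E nonneg feasible] by blast
  then have \<pi>0: "is_path E start goal \<pi>0" "pcost c2 \<pi>0 \<le> W" unfolding cost_optimal_def by auto
  interpret phase1: backward_search E c2 c1 hb2 UNIV "ereal W" goal
    using finite_E nonneg by unfold_locales
  interpret phase2: backward_search E c1 c2 hb1 "bs_expanded \<sigma>1" F0 goal
    using finite_E nonneg by unfold_locales
  have X1_covers: "set \<rho> \<subseteq> bs_expanded \<sigma>1"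
    if "is_path E start u x" "is_path E u goal \<rho>" "pcost c2 x + pcost c2 \<rho> \<le> W" for u x \<rho>
    using phase1.path_expanded_if_admissible[OF phase1 adm(1) that(1,2) subset_UNIV] that(3) by simp
  have \<pi>0_X1: "set \<pi>0 \<subseteq> bs_expanded \<sigma>1" using X1_covers[of start "[start]" \<pi>0] \<pi>0 by simp
  then have "start \<in> bs_expanded \<sigma>1" using \<pi>0(1) unfolding is_path_def by (metis hd_in_set subsetD)
  then have F0_ge: "ereal (pcost c1 \<pi>0) \<le> F0" using optimum_le_ub1v[OF finite_E nonneg opt] F0 by simp
  have \<pi>0_X2: "set \<pi>0 \<subseteq> bs_expanded \<sigma>2"
    using phase2.path_expanded_if_admissible[OF phase2 adm(2), of start "[start]" \<pi>0] \<pi>0(1) \<pi>0_X1 F0_ge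
    by simp
  interpret constrained_search_optimal E c1 c2 W "bs_expanded \<sigma>2" "h1v E c1 goal (bs_expanded \<sigma>1)"
    "h2v E c2 goal" "ub1v E c1 c2 goal" "ub2v E c1 c2 goal (bs_expanded \<sigma>1)" start F0 goal \<pi>0
    by (rule wc_constrained_search_optimal[OF finite_E nonneg _ phase2.expanded_has_path[OF phase2(1)]
        opt \<pi>0_X2 F0_ge]) (fact X1_covers, simp)
  show ?thesis using search_result_optimal[OF search] .
qed

theorem theorem3:
  fixes S :: "'a set" and E :: "('a \<times> 'a) set" and c1 c2 :: "'a \<Rightarrow> 'a \<Rightarrow> real"
    and start goal :: 'a and W :: real and hb1 hb2 :: "'a \<Rightarrow> real"
  assumes "finite S" and "E \<subseteq> S \<times> S" and "start \<in> S" and "goal \<in> S"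
    and "\<forall>(u, v) \<in> E. c1 u v \<ge> 0 \<and> c2 u v \<ge> 0"
    and "admissible E c2 start hb2" and "admissible E c1 start hb1"
    and "\<exists>\<pi>. is_path E start goal \<pi> \<and> pcost c2 \<pi> \<le> W"
  shows
    "run_terminates (bs_step E c2 c1 hb2 UNIV (ereal W)) bs_halted (bs_init goal UNIV) \<and>
     (\<forall>\<sigma>1. (bs_step E c2 c1 hb2 UNIV (ereal W))\<^sup>*\<^sup>* (bs_init goal UNIV) \<sigma>1 \<and> bs_halted \<sigma>1 \<longrightarrow>
       (let X1 = bs_expanded \<sigma>1;
            F0 = (if start \<in> X1 then ereal (ub1v E c1 c2 goal start) else \<infinity>)
        in run_terminates (bs_step E c1 c2 hb1 X1 F0) bs_halted (bs_init goal X1) \<and>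
           (\<forall>\<sigma>2. (bs_step E c1 c2 hb1 X1 F0)\<^sup>*\<^sup>* (bs_init goal X1) \<sigma>2 \<and> bs_halted \<sigma>2 \<longrightarrow>
             (let X2 = bs_expanded \<sigma>2;
                  R = ms_step E c1 c2 W X2 (h1v E c1 goal X1) (h2v E c2 goal)
                        (ub1v E c1 c2 goal) (ub2v E c1 c2 goal X1)
              in run_terminates R ms_halted (ms_init start X2 F0) \<and>
                 (\<forall>\<sigma>. R\<^sup>*\<^sup>* (ms_init start X2 F0) \<sigma> \<and> ms_halted \<sigma> \<longrightarrow>
                   (\<exists>x. ms_sol \<sigma> = Some x \<and>
                      (\<exists>q. is_path E (last x) goal q \<and>
                           pcost c1 q = h1v E c1 goal X1 (last x) \<and>
                           pcost c2 q = ub2v E c1 c2 goal X1 (last x)) \<and>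
                      (\<forall>q. is_path E (last x) goal q \<and>
                           pcost c1 q = h1v E c1 goal X1 (last x) \<and>
                           pcost c2 q = ub2v E c1 c2 goal X1 (last x) \<longrightarrow>
                         cost_optimal E c1 c2 W start goal (x @ tl q))))))))"
proof -
  have finite_E: "finite E" using assms(1,2) by (meson finite_SigmaI finite_subset)
  have nonneg: "nonneg E c1" "nonneg E c2" using assms(5) unfolding nonneg_def by auto
  have backward_terminates: "run_terminates (bs_step E p q h A B) bs_halted (bs_init goal A)"
    if "nonneg E p" "nonneg E q" for p q h A B
    using backward_search.bs_terminates[OF backward_search.intro[OF finite_E that]] .
  have search_terminates: "run_terminates (ms_step E c1 c2 W X h1 h2 ub1 ub2) ms_halted (ms_init start X F)"
    for X h1 h2 ub1 ub2 F
    using constrained_search.ms_terminates[OF constrained_search.intro[OF finite_E nonneg(2)]] .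
  show ?thesis
    unfolding Let_def
    using backward_terminates[OF nonneg(2,1)] backward_terminates[OF nonneg] search_terminates
      wc_astar_result_optimal[OF finite_E nonneg assms(6-8) _ _ refl]
    by blast
qed

end
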